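(* Let $S$ be a semibounded relation in $\mathfrak H$ with lower bound $\gamma\in\mathbb R$, let $c\le\gamma$, and let $Q_c$ (into $\mathfrak K_c$) be a representing map for $\mathfrak t(S)-c$ with companion relation $J_c$. For a relation $H$ in $\mathfrak H$ the following are equivalent: (i) $H$ is a selfadjoint extension of $S$, bounded below by $c$, with $\mathfrak t_{S_{\rm F}}\subset\mathfrak t_H\subset\mathfrak t_{S_{{\rm K},c}}$; (ii) $H=c+R_c^*R_c^{**}$ for some operator $R_c$ from $\mathfrak H$ to $\mathfrak K_c$ satisfying $Q_c\subset R_c\subset(J_c^* )_{\rm reg}$.
   Context: Linear relations are linear subspaces of $\mathfrak H\times\mathfrak K$; $T^*$ adjoint, $T^{**}$ closure; products $RT=\{\{f,h\}:\exists g,\{f,g\}\in T,\{g,h\}\in R\}$; $c+T=\{\{f,g+cf\}:\{f,g\}\in T\}$; for closed $T$, $T_{\rm reg}=\{\{f,(I-\pi)g\}:\{f,g\}\in T\}$ with $\pi$ the projection onto $\mathrm{mul}\,T$. $S$ semibounded with lower bound $\gamma$: $\gamma$ is the supremum of $c$ with $(\varphi',\varphi)\ge c\|\varphi\|^2$ on $S$; $\mathfrak t(S)[\varphi,\psi]=(\varphi',\psi)$ on $\mathrm{dom}\,S$. A representing map for $\mathfrak t(S)-c$ is a linear operator $Q_c$ into a Hilbert space $\mathfrak K_c$ with $\mathrm{dom}\,Q_c=\mathrm{dom}\,S$ and $\mathfrak t(S)[\varphi,\psi]=c(\varphi,\psi)+(Q_c\varphi,Q_c\psi)$; companion relation $J_c=\{\{Q_c\varphi,\varphi'-c\varphi\}:\{\varphi,\varphi'\}\in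 S\}$. Friedrichs extension $S_{\rm F}=c+Q_c^*Q_c^{**}$, Kreĭn type extension $S_{{\rm K},c}=c+J_c^{**}J_c^*$. For a semibounded selfadjoint relation $H$, $\mathfrak t_H$ is its associated closed form (closure of $\mathfrak t(H)[\varphi,\psi]=(\varphi',\psi)$ on $\mathrm{dom}\,H$). Form inclusion $\mathfrak t_1\subset\mathfrak t_2$ means $\mathfrak t_2$ extends $\mathfrak t_1$. *)

theory Defs
  imports "HOL-Analysis.Analysis"
begin

text \<open>HOL-Analysis only provides real inner product spaces, so we introduce complex Hilbert
spaces as a type class: a real Banach space with a compatible complex scalar multiplication and
a complex inner product (linear in the first argument, conjugate linear in the second) that
induces the norm.\<close>

class chilbert = real_normed_vector + complete_space +
  fixes scaleC :: "complex \<Rightarrow> 'a \<Rightarrow> 'a"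
    and cinner :: "'a \<Rightarrow> 'a \<Rightarrow> complex"
  assumes scaleC_add_right: "scaleC a (x + y) = scaleC a x + scaleC a y"
    and scaleC_add_left: "scaleC (a + b) x = scaleC a x + scaleC b x"
    and scaleC_scaleC: "scaleC a (scaleC b x) = scaleC (a * b) x"
    and scaleC_one: "scaleC 1 x = x"
    and scaleR_scaleC: "scaleR r x = scaleC (complex_of_real r) x"
    and cinner_commute: "cinner x y = cnj (cinner y x)"
    and cinner_add_left: "cinner (x + y) z = cinner x z + cinner y z"
    and cinner_scaleC_left: "cinner (scaleC a x) y = a * cinner x y"
    and norm_eq_sqrt_cinner: "norm x = sqrt (Re (cinner x x))"

text \<open>Non-vacuity: the complex numbers form a complex Hilbert space.\<close>

instantiation complex :: chilbert
begin
definition scaleC_complex :: "complex \<Rightarrow> complex \<Rightarrow> complex" where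
  "scaleC_complex a x = a * x"
definition cinner_complex :: "complex \<Rightarrow> complex \<Rightarrow> complex" where
  "cinner_complex x y = x * cnj y"
instance
proof
  fix x :: complex
  have "Re (x * cnj x) = (Re x)\<^sup>2 + (Im x)\<^sup>2"
    by (simp add: power2_eq_square)
  then show "norm x = sqrt (Re (cinner x x))"
    by (simp add: cinner_complex_def norm_complex_def)
qed (auto simp: scaleC_complex_def cinner_complex_def algebra_simps scaleR_conv_of_real)
end

text \<open>A relation from \<open>'a\<close> to \<open>'b\<close> is a set of pairs; \<open>(f, g) \<in> T\<close> stands for \<open>{f,g} \<in> T\<close>.\<close>

definition csubspace :: "'a::chilbert set \<Rightarrow> bool" where
  "csubspace M \<longleftrightarrow> 0 \<in> M \<and> (\<forall>x\<in>M. \<forall>y\<in>M. x + y \<in> M) \<and> (\<forall>a. \<forall>x\<in>M. scaleC a x \<in> M)"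

definition linear_relation :: "('a::chilbert \<times> 'b::chilbert) set \<Rightarrow> bool" where
  "linear_relation T \<longleftrightarrow> (0, 0) \<in> T \<and> (\<forall>p\<in>T. \<forall>q\<in>T. (fst p + fst q, snd p + snd q) \<in> T)
     \<and> (\<forall>a. \<forall>p\<in>T. (scaleC a (fst p), scaleC a (snd p)) \<in> T)"

definition rdom :: "('a \<times> 'b) set \<Rightarrow> 'a set" where
  "rdom T = {f. \<exists>g. (f, g) \<in> T}"

definition rmul :: "('a::zero \<times> 'b) set \<Rightarrow> 'b set" where
  "rmul T = {g. (0, g) \<in> T}"

definition is_operator :: "('a::chilbert \<times> 'b::chilbert) set \<Rightarrow> bool" where
  "is_operator T \<longleftrightarrow> linear_relation T \<and> rmul T = {0}"

definition adj :: "('a::chilbert \<times> 'b::chilbert) set \<Rightarrow> ('b \<times> 'a) set" where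
  "adj T = {(h, k). \<forall>(f, g)\<in>T. cinner g h = cinner f k}"

definition rprod :: "('b \<times> 'c) set \<Rightarrow> ('a \<times> 'b) set \<Rightarrow> ('a \<times> 'c) set" where
  "rprod R T = {(f, h). \<exists>g. (f, g) \<in> T \<and> (g, h) \<in> R}"

definition rshift :: "real \<Rightarrow> ('a::chilbert \<times> 'a) set \<Rightarrow> ('a \<times> 'a) set" where
  "rshift c T = {(f, g + scaleC (complex_of_real c) f) | f g. (f, g) \<in> T}"

definition oproj :: "'a::chilbert set \<Rightarrow> 'a \<Rightarrow> 'a" where
  "oproj M g = (THE p. p \<in> M \<and> (\<forall>m\<in>M. cinner (g - p) m = 0))"

definition rreg :: "('a::chilbert \<times> 'b::chilbert) set \<Rightarrow> ('a \<times> 'b) set" where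
  "rreg T = {(f, g - oproj (rmul T) g) | f g. (f, g) \<in> T}"

definition selfadjoint :: "('a::chilbert \<times> 'a) set \<Rightarrow> bool" where
  "selfadjoint H \<longleftrightarrow> adj H = H"

definition bounded_below_by :: "('a::chilbert \<times> 'a) set \<Rightarrow> real \<Rightarrow> bool" where
  "bounded_below_by T c \<longleftrightarrow>
     (\<forall>(\<phi>, \<phi>')\<in>T. Im (cinner \<phi>' \<phi>) = 0 \<and> Re (cinner \<phi>' \<phi>) \<ge> c * (norm \<phi>)\<^sup>2)"

definition semibounded :: "('a::chilbert \<times> 'a) set \<Rightarrow> bool" where
  "semibounded T \<longleftrightarrow> linear_relation T \<and> (\<exists>c. bounded_below_by T c)"

definition lower_bound :: "('a::chilbert \<times> 'a) set \<Rightarrow> real \<Rightarrow> bool" where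
  "lower_bound S \<gamma> \<longleftrightarrow> semibounded S \<and> \<gamma> = Sup {c. bounded_below_by S c}
     \<and> bdd_above {c. bounded_below_by S c}"

text \<open>A (sesquilinear) form is given by its domain and its values.\<close>

type_synonym 'a form = "'a set \<times> ('a \<Rightarrow> 'a \<Rightarrow> complex)"

definition form_incl :: "'a form \<Rightarrow> 'a form \<Rightarrow> bool" where
  "form_incl t1 t2 \<longleftrightarrow> fst t1 \<subseteq> fst t2 \<and> (\<forall>x\<in>fst t1. \<forall>y\<in>fst t1. snd t2 x y = snd t1 x y)"

definition rform :: "('a::chilbert \<times> 'a) set \<Rightarrow> 'a form" where
  "rform S = (rdom S, \<lambda>\<phi> \<psi>. cinner (SOME \<phi>'. (\<phi>, \<phi>') \<in> S) \<psi>)"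

definition form_approx :: "'a::chilbert form \<Rightarrow> (nat \<Rightarrow> 'a) \<Rightarrow> 'a \<Rightarrow> bool" where
  "form_approx t u x \<longleftrightarrow> (\<forall>n. u n \<in> fst t) \<and> u \<longlonglongrightarrow> x \<and>
     (\<forall>e>0. \<exists>N. \<forall>m\<ge>N. \<forall>n\<ge>N. cmod (snd t (u n - u m) (u n - u m)) < e)"

definition form_closure :: "'a::chilbert form \<Rightarrow> 'a form" where
  "form_closure t = ({x. \<exists>u. form_approx t u x},
     \<lambda>x y. lim (\<lambda>n. snd t ((SOME u. form_approx t u x) n) ((SOME u. form_approx t u y) n)))"

definition closed_form :: "('a::chilbert \<times> 'a) set \<Rightarrow> 'a form" where
  "closed_form H = form_closure (rform H)"

definition representing_map :: "('a::chilbert \<times> 'a) set \<Rightarrow> real \<Rightarrow> ('a \<times> 'k::chilbert) set \<Rightarrow> bool" where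
  "representing_map S c Q \<longleftrightarrow> is_operator Q \<and> rdom Q = rdom S \<and>
     (\<forall>(\<phi>, \<phi>')\<in>S. \<forall>(\<psi>, \<psi>')\<in>S. \<forall>q p. (\<phi>, q) \<in> Q \<longrightarrow> (\<psi>, p) \<in> Q \<longrightarrow>
        cinner \<phi>' \<psi> = complex_of_real c * cinner \<phi> \<psi> + cinner q p)"

definition companion :: "('a::chilbert \<times> 'a) set \<Rightarrow> real \<Rightarrow> ('a \<times> 'k::chilbert) set \<Rightarrow> ('k \<times> 'a) set" where
  "companion S c Q = {(q, \<phi>' - scaleC (complex_of_real c) \<phi>) | \<phi> \<phi>' q. (\<phi>, \<phi>') \<in> S \<and> (\<phi>, q) \<in> Q}"

definition friedrichs :: "real \<Rightarrow> ('a::chilbert \<times> 'k::chilbert) set \<Rightarrow> ('a \<times> 'a) set" where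
  "friedrichs c Q = rshift c (rprod (adj Q) (adj (adj Q)))"

definition krein :: "real \<Rightarrow> ('k::chilbert \<times> 'a::chilbert) set \<Rightarrow> ('a \<times> 'a) set" where
  "krein c J = rshift c (rprod (adj (adj J)) (adj J))"

end

theory Submission
  imports Defs
begin

text \<open>For a closed operator \<open>T\<close>, the relation \<open>c + T* T\<close> is selfadjoint and bounded below by
  \<open>c\<close>, and its closed form has domain \<open>dom T\<close> and values \<open>c (x, y) + (T x, T y)\<close>, because
  \<open>dom T* T\<close> is a core for \<open>T\<close>. With \<open>K = (J_c*)_reg\<close> one has \<open>S_{K,c} = c + K* K\<close> and
  \<open>S_F = c + Q_c** * Q_c**\<close>, and \<open>Q_c \<subseteq> K\<close> by the representing property; so for
  \<open>Q_c \<subseteq> R \<subseteq> K\<close> the form inclusions in (i) reduce to \<open>Q_c** \<subseteq> R** \<subseteq> K\<close>.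
  Conversely, if \<open>H\<close> satisfies (i), let \<open>R\<close> be the restriction of \<open>K\<close> to \<open>dom H\<close>: comparing
  \<open>t_H\<close> with the closed form of \<open>S_{K,c}\<close> on \<open>dom H\<close> gives \<open>H \<subseteq> c + R* R**\<close>, and
  equality holds because both sides are selfadjoint.\<close>

section \<open>Complex inner product spaces\<close>

lemma cinner_add_right: "cinner x (y + z) = cinner x y + cinner x z"
  by (metis cinner_commute cinner_add_left complex_cnj_add)

lemma cinner_scaleC_right: "cinner x (scaleC a y) = cnj a * cinner x y"
  by (metis cinner_commute cinner_scaleC_left complex_cnj_mult)

lemma scaleC_zero_right [simp]: "scaleC a (0::'a::chilbert) = 0"
  by (metis add_cancel_right_right add_0 scaleC_add_right)

lemma scaleC_zero_left [simp]: "scaleC 0 (x::'a::chilbert) = 0"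
  by (metis of_real_0 scaleR_scaleC scaleR_zero_left)

lemma scaleC_minus_left: "scaleC (- a) (x::'a::chilbert) = - scaleC a x"
  by (metis add.inverse_unique add.right_inverse scaleC_add_left scaleC_zero_left)

lemma scaleC_minus_right: "scaleC a (- (x::'a::chilbert)) = - scaleC a x"
  by (metis add.inverse_unique left_minus scaleC_add_right scaleC_zero_right)

lemma scaleC_diff_right: "scaleC a ((x::'a::chilbert) - y) = scaleC a x - scaleC a y"
  by (metis diff_conv_add_uminus scaleC_add_right scaleC_minus_right)

lemma scaleC_minus_one: "scaleC (-1) (x::'a::chilbert) = - x"
  using scaleC_minus_left[of 1 x] by (simp add: scaleC_one)

lemma cinner_zero_left [simp]: "cinner 0 y = 0"
proof -
  have "cinner (0 + 0) y = cinner 0 y + cinner 0 y" by (rule cinner_add_left)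
  thus ?thesis by simp
qed

lemma cinner_zero_right [simp]: "cinner x 0 = 0"
  by (subst cinner_commute, simp)

lemma cinner_minus_left: "cinner (- x) y = - cinner x y"
proof -
  have "cinner (x + - x) y = cinner x y + cinner (- x) y" by (rule cinner_add_left)
  thus ?thesis by (simp add: eq_neg_iff_add_eq_0 add.commute)
qed

lemma cinner_minus_right: "cinner x (- y) = - cinner x y"
  by (subst cinner_commute, subst (2) cinner_commute, simp add: cinner_minus_left)

lemma cinner_diff_left: "cinner (x - y) z = cinner x z - cinner y z"
  unfolding diff_conv_add_uminus cinner_add_left cinner_minus_left by simp

lemma cinner_diff_right: "cinner x (y - z) = cinner x y - cinner x z"
  unfolding diff_conv_add_uminus cinner_add_right cinner_minus_right by simp

lemma cinner_scaleR_left: "cinner (scaleR r x) y = complex_of_real r * cinner x y"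
  unfolding scaleR_scaleC by (rule cinner_scaleC_left)

lemma cinner_scaleR_right: "cinner x (scaleR r y) = complex_of_real r * cinner x y"
  unfolding scaleR_scaleC cinner_scaleC_right by simp

lemma cinner_eq_commute: "cinner a b = cinner c d \<Longrightarrow> cinner b a = cinner d c"
  by (subst cinner_commute, subst (2) cinner_commute, simp)

lemma cinner_self_Re: "Re (cinner x x) = (norm x)\<^sup>2"
proof -
  have "sqrt (Re (cinner x x)) \<ge> 0" using norm_eq_sqrt_cinner[of x] by (metis norm_ge_zero)
  hence "Re (cinner x x) \<ge> 0" using real_sqrt_ge_0_iff by blast
  thus ?thesis by (metis norm_eq_sqrt_cinner real_sqrt_pow2)
qed

lemma cinner_self: "cinner x x = complex_of_real ((norm x)\<^sup>2)"
proof -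
  have "cinner x x = cnj (cinner x x)" by (rule cinner_commute)
  hence "Im (cinner x x) = Im (cnj (cinner x x))" by (rule arg_cong)
  hence "Im (cinner x x) = 0" by simp
  thus ?thesis using cinner_self_Re complex_eq_iff by auto
qed

lemma cinner_self_eq_0 [simp]: "cinner x x = 0 \<longleftrightarrow> x = 0"
  by (simp add: cinner_self)

lemma norm_scaleC: "norm (scaleC a x) = cmod a * norm x"
proof -
  have "cinner (scaleC a x) (scaleC a x) = a * (cnj a * cinner x x)"
    unfolding cinner_scaleC_left cinner_scaleC_right by (simp add: mult.left_commute)
  also have "\<dots> = complex_of_real ((cmod a)\<^sup>2 * (norm x)\<^sup>2)"
    unfolding cinner_self mult.assoc[symmetric] complex_norm_square[symmetric] by simp
  finally have "(norm (scaleC a x))\<^sup>2 = (cmod a * norm x)\<^sup>2"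
    unfolding cinner_self of_real_eq_iff power_mult_distrib .
  thus ?thesis using power2_eq_iff_nonneg[of "norm (scaleC a x)" "cmod a * norm x"] by simp
qed

lemma norm_diff_proj_sq:
  assumes "y \<noteq> 0"
  shows "(norm (x - scaleC (cinner x y / complex_of_real ((norm y)\<^sup>2)) y))\<^sup>2
          = (norm x)\<^sup>2 - (cmod (cinner x y))\<^sup>2 / (norm y)\<^sup>2"
proof -
  define n where "n = (norm y)\<^sup>2"
  have n: "n > 0" using assms by (simp add: n_def)
  define c where "c = cinner x y"
  define t where "t = c / complex_of_real n"
  have cc: "c * cnj c = complex_of_real ((cmod c)\<^sup>2)" by (rule complex_norm_square[symmetric])
  have "cinner (x - scaleC t y) (x - scaleC t y) =
     cinner x x - cnj t * cinner x y - t * cinner y x + t * cnj t * cinner y y"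
    unfolding cinner_diff_left cinner_diff_right cinner_scaleC_left cinner_scaleC_right
    by (simp add: algebra_simps)
  also have "cinner y y = complex_of_real n" by (simp add: cinner_self n_def)
  also have "cinner y x = cnj c" unfolding c_def by (rule cinner_commute)
  also have "cinner x x - cnj t * cinner x y - t * cnj c + t * cnj t * complex_of_real n
      = complex_of_real ((norm x)\<^sup>2) - c * cnj c / complex_of_real n"
    using n unfolding t_def c_def[symmetric] cinner_self by (simp add: field_simps power2_eq_square)
  also have "\<dots> = complex_of_real ((norm x)\<^sup>2 - (cmod c)\<^sup>2 / n)"
    unfolding cc by simp
  finally show ?thesis unfolding cinner_self of_real_eq_iff t_def c_def n_def .
qed

lemma norm_cinner_le: "cmod (cinner x y) \<le> norm x * norm y"
proof (cases "y = 0")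
  case False
  have "0 \<le> (norm x)\<^sup>2 - (cmod (cinner x y))\<^sup>2 / (norm y)\<^sup>2"
    using norm_diff_proj_sq[OF False, of x] by (metis zero_le_power2)
  hence "(cmod (cinner x y))\<^sup>2 \<le> (norm x)\<^sup>2 * (norm y)\<^sup>2"
    using False by (simp add: field_simps)
  hence "(cmod (cinner x y))\<^sup>2 \<le> (norm x * norm y)\<^sup>2"
    by (simp add: power_mult_distrib)
  thus ?thesis by (rule power2_le_imp_le) simp
qed simp

lemma parallelogram_law:
  fixes a b :: "'a::chilbert"
  shows "(norm (a + b))\<^sup>2 + (norm (a - b))\<^sup>2 = 2 * (norm a)\<^sup>2 + 2 * (norm b)\<^sup>2"
proof -
  have "cinner (a + b) (a + b) + cinner (a - b) (a - b) = 2 * cinner a a + 2 * cinner b b"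
    unfolding cinner_add_left cinner_add_right cinner_diff_left cinner_diff_right by simp
  hence "complex_of_real ((norm (a + b))\<^sup>2 + (norm (a - b))\<^sup>2)
      = complex_of_real (2 * (norm a)\<^sup>2 + 2 * (norm b)\<^sup>2)" unfolding cinner_self by simp
  thus ?thesis unfolding of_real_eq_iff .
qed

lemma bounded_bilinear_cinner: "bounded_bilinear (cinner :: 'a::chilbert \<Rightarrow> 'a \<Rightarrow> complex)"
proof
  fix a a' b b' :: 'a and r :: real
  show "cinner (a + a') b = cinner a b + cinner a' b" by (rule cinner_add_left)
  show "cinner a (b + b') = cinner a b + cinner a b'" by (rule cinner_add_right)
  show "cinner (scaleR r a) b = scaleR r (cinner a b)"
    by (simp add: cinner_scaleR_left scaleR_conv_of_real)
  show "cinner a (scaleR r b) = scaleR r (cinner a b)"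
    by (simp add: cinner_scaleR_right scaleR_conv_of_real)
  show "\<exists>K. \<forall>a b::'a. norm (cinner a b) \<le> norm a * norm b * K"
    by (rule exI[of _ 1]) (simp add: norm_cinner_le)
qed

lemmas tendsto_cinner = bounded_bilinear.tendsto[OF bounded_bilinear_cinner]
lemmas continuous_on_cinner = bounded_bilinear.continuous_on[OF bounded_bilinear_cinner]

lemma bounded_linear_scaleC: "bounded_linear (scaleC a :: 'a::chilbert \<Rightarrow> 'a)"
proof (rule bounded_linear_intro[where K = "cmod a"])
  fix x y :: 'a and r :: real
  show "scaleC a (x + y) = scaleC a x + scaleC a y" by (rule scaleC_add_right)
  show "scaleC a (scaleR r x) = scaleR r (scaleC a x)"
    unfolding scaleR_scaleC scaleC_scaleC by (simp add: mult.commute)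
  show "norm (scaleC a x) \<le> norm x * cmod a" by (simp add: norm_scaleC mult.commute)
qed

instantiation prod :: (chilbert, chilbert) chilbert
begin
definition scaleC_prod :: "complex \<Rightarrow> 'a \<times> 'b \<Rightarrow> 'a \<times> 'b" where
  "scaleC_prod a p = (scaleC a (fst p), scaleC a (snd p))"
definition cinner_prod :: "'a \<times> 'b \<Rightarrow> 'a \<times> 'b \<Rightarrow> complex" where
  "cinner_prod p q = cinner (fst p) (fst q) + cinner (snd p) (snd q)"
instance
proof
  fix x y z :: "'a \<times> 'b" and a b :: complex and r :: real
  show "scaleC a (x + y) = scaleC a x + scaleC a y"
    by (simp add: scaleC_prod_def scaleC_add_right)
  show "scaleC (a + b) x = scaleC a x + scaleC b x"
    by (simp add: scaleC_prod_def scaleC_add_left)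
  show "scaleC a (scaleC b x) = scaleC (a * b) x"
    by (simp add: scaleC_prod_def scaleC_scaleC)
  show "scaleC 1 x = x" by (simp add: scaleC_prod_def scaleC_one)
  show "scaleR r x = scaleC (complex_of_real r) x"
    by (simp add: scaleC_prod_def scaleR_prod_def scaleR_scaleC)
  show "cinner x y = cnj (cinner y x)"
    by (simp add: cinner_prod_def) (metis cinner_commute)
  show "cinner (x + y) z = cinner x z + cinner y z"
    by (simp add: cinner_prod_def cinner_add_left)
  show "cinner (scaleC a x) y = a * cinner x y"
    by (simp add: cinner_prod_def scaleC_prod_def cinner_scaleC_left algebra_simps)
  show "norm x = sqrt (Re (cinner x x))"
    by (simp add: cinner_prod_def norm_prod_def cinner_self_Re)
qed
end

lemma cinner_Pair: "cinner (a, b) (c, d) = cinner a c + cinner b d"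
  by (simp add: cinner_prod_def)

section \<open>Orthogonal projections\<close>

lemma csubspace_scaleR: "csubspace M \<Longrightarrow> x \<in> M \<Longrightarrow> scaleR r x \<in> M"
  unfolding csubspace_def scaleR_scaleC by blast

lemma csubspace_diff: "csubspace M \<Longrightarrow> x \<in> M \<Longrightarrow> y \<in> M \<Longrightarrow> x - y \<in> M"
  unfolding csubspace_def using scaleC_minus_one[of y] by (metis diff_conv_add_uminus)

lemma csubspace_closure:
  fixes M :: "'a::chilbert set"
  assumes M: "csubspace M" shows "csubspace (closure M)"
  unfolding csubspace_def
proof (intro conjI ballI allI)
  show "0 \<in> closure M" using M closure_subset unfolding csubspace_def by blast
next
  fix x y assume "x \<in> closure M" "y \<in> closure M"
  then obtain a b where a: "\<forall>n. a n \<in> M" "a \<longlonglongrightarrow> x" and b: "\<forall>n. b n \<in> M" "b \<longlonglongrightarrow> y"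
    unfolding closure_sequential by blast
  have "\<forall>n. a n + b n \<in> M" using a b M unfolding csubspace_def by blast
  moreover have "(\<lambda>n. a n + b n) \<longlonglongrightarrow> x + y" using a b by (intro tendsto_intros) auto
  ultimately show "x + y \<in> closure M"
    unfolding closure_sequential by (intro exI[of _ "\<lambda>n. a n + b n"]) simp
next
  fix r x assume "x \<in> closure M"
  then obtain a where a: "\<forall>n. a n \<in> M" "a \<longlonglongrightarrow> x" unfolding closure_sequential by blast
  have "\<forall>n. scaleC r (a n) \<in> M" using a M unfolding csubspace_def by blast
  moreover have "(\<lambda>n. scaleC r (a n)) \<longlonglongrightarrow> scaleC r x"
    using bounded_linear.tendsto[OF bounded_linear_scaleC a(2)] .
  ultimately show "scaleC r x \<in> closure M"
    unfolding closure_sequential by (intro exI[of _ "\<lambda>n. scaleC r (a n)"]) simp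
qed

text \<open>The parallelogram law applied to \<open>x - u k\<close>, \<open>x - u l\<close> and the midpoint of \<open>u k\<close>, \<open>u l\<close>
  in \<open>M\<close>.\<close>

lemma minimizing_sequence_Cauchy:
  assumes sub: "csubspace M" and u: "\<And>n. u n \<in> M" and d: "\<And>m. m \<in> M \<Longrightarrow> d \<le> norm (x - m)"
    and d0: "d \<ge> 0" and close: "\<And>n. (norm (x - u n))\<^sup>2 < d\<^sup>2 + inverse (real (Suc n))"
  shows "Cauchy u"
proof (rule CauchyI)
  have key: "(norm (u k - u l))\<^sup>2 \<le> 2 * inverse (real (Suc k)) + 2 * inverse (real (Suc l))" for k l
  proof -
    have mid: "scaleR (1/2) (u k + u l) \<in> M"
      using sub u by (metis csubspace_def csubspace_scaleR)
    have "(x - u k) + (x - u l) = scaleR 2 (x - scaleR (1/2) (u k + u l))"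
      by (simp add: algebra_simps scaleR_2)
    hence "2 * d \<le> norm ((x - u k) + (x - u l))" using d[OF mid] by simp
    hence "(2 * d)\<^sup>2 \<le> (norm ((x - u k) + (x - u l)))\<^sup>2"
      using d0 by (intro power_mono) auto
    moreover have "(norm ((x - u k) + (x - u l)))\<^sup>2 + (norm ((x - u k) - (x - u l)))\<^sup>2
        = 2 * (norm (x - u k))\<^sup>2 + 2 * (norm (x - u l))\<^sup>2" by (rule parallelogram_law)
    moreover have "(x - u k) - (x - u l) = u l - u k" by simp
    moreover have "norm (u l - u k) = norm (u k - u l)" by (rule norm_minus_commute)
    ultimately show ?thesis using close[of k] close[of l] by (simp add: power_mult_distrib)
  qed
  fix e :: real assume e: "e > 0"
  obtain N where N: "inverse (real (Suc N)) < e\<^sup>2 / 4"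
    using e by (metis reals_Archimedean zero_less_divide_iff zero_less_numeral zero_less_power)
  have "norm (u m - u n) < e" if "m \<ge> N" "n \<ge> N" for m n
  proof -
    have "inverse (real (Suc m)) \<le> inverse (real (Suc N))"
      "inverse (real (Suc n)) \<le> inverse (real (Suc N))"
      using that by (auto intro!: le_imp_inverse_le)
    hence "(norm (u m - u n))\<^sup>2 < e\<^sup>2" using key[of m n] N by linarith
    thus ?thesis using e power2_less_imp_less[of "norm (u m - u n)" e] by simp
  qed
  thus "\<exists>M. \<forall>m\<ge>M. \<forall>n\<ge>M. norm (u m - u n) < e" by blast
qed

lemma closest_point_orthogonal:
  assumes sub: "csubspace M" and pM: "p \<in> M" and m: "m \<in> M"
    and closest: "\<And>m. m \<in> M \<Longrightarrow> norm (x - p) \<le> norm (x - m)"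
  shows "cinner (x - p) m = 0"
proof (rule ccontr)
  assume nz: "cinner (x - p) m \<noteq> 0"
  hence m0: "m \<noteq> 0" by auto
  define s where "s = cinner (x - p) m / complex_of_real ((norm m)\<^sup>2)"
  have "p + scaleC s m \<in> M" using sub pM m unfolding csubspace_def by blast
  hence "norm (x - p) \<le> norm (x - (p + scaleC s m))" by (rule closest)
  hence "(norm (x - p))\<^sup>2 \<le> (norm (x - p - scaleC s m))\<^sup>2" by (simp add: power_mono algebra_simps)
  also have "\<dots> = (norm (x - p))\<^sup>2 - (cmod (cinner (x - p) m))\<^sup>2 / (norm m)\<^sup>2"
    unfolding s_def by (rule norm_diff_proj_sq[OF m0])
  finally have "(cmod (cinner (x - p) m))\<^sup>2 / (norm m)\<^sup>2 \<le> 0" by linarith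
  moreover have "(cmod (cinner (x - p) m))\<^sup>2 / (norm m)\<^sup>2 > 0" using nz m0 by simp
  ultimately show False by linarith
qed

lemma orthogonal_projection_exists:
  fixes M :: "'a::chilbert set"
  assumes sub: "csubspace M" and cl: "closed M"
  shows "\<exists>p\<in>M. \<forall>m\<in>M. cinner (x - p) m = 0"
proof -
  define d where "d = Inf ((\<lambda>m. norm (x - m)) ` M)"
  have ne: "(\<lambda>m. norm (x - m)) ` M \<noteq> {}" using sub unfolding csubspace_def by auto
  have bdd: "bdd_below ((\<lambda>m. norm (x - m)) ` M)" by (rule bdd_belowI[of _ 0]) auto
  have dle: "d \<le> norm (x - m)" if "m \<in> M" for m
    unfolding d_def using bdd that by (auto intro: cInf_lower)
  have d0: "d \<ge> 0" unfolding d_def using ne by (intro cInf_greatest) auto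
  have "\<exists>m\<in>M. (norm (x - m))\<^sup>2 < d\<^sup>2 + inverse (real (Suc n))" for n
  proof -
    have "d < sqrt (d\<^sup>2 + inverse (real (Suc n)))"
      using d0 by (metis add.right_neutral add_less_cancel_left inverse_positive_iff_positive
         of_nat_0_less_iff real_less_rsqrt zero_less_Suc)
    then obtain m where m: "m \<in> M" "norm (x - m) < sqrt (d\<^sup>2 + inverse (real (Suc n)))"
      using cInf_less_iff[OF ne bdd] unfolding d_def by blast
    hence "(norm (x - m))\<^sup>2 < d\<^sup>2 + inverse (real (Suc n))"
      by (metis norm_ge_zero real_sqrt_less_iff real_sqrt_pow2_iff real_sqrt_unique
          abs_of_nonneg less_le_trans not_le real_less_lsqrt)
    thus ?thesis using m by blast
  qed
  then obtain u where u: "\<And>n. u n \<in> M" "\<And>n. (norm (x - u n))\<^sup>2 < d\<^sup>2 + inverse (real (Suc n))"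
    by metis
  obtain p where p: "u \<longlonglongrightarrow> p"
    using minimizing_sequence_Cauchy[OF sub u(1) dle d0 u(2)] Cauchy_convergent_iff convergent_def
    by blast
  have pM: "p \<in> M" using closed_sequentially[OF cl u(1) p] .
  have "(\<lambda>n. (norm (x - u n))\<^sup>2) \<longlonglongrightarrow> (norm (x - p))\<^sup>2"
    by (intro tendsto_intros p)
  moreover have "(\<lambda>n. d\<^sup>2 + inverse (real (Suc n))) \<longlonglongrightarrow> d\<^sup>2 + 0"
    by (intro tendsto_intros LIMSEQ_inverse_real_of_nat)
  ultimately have "(norm (x - p))\<^sup>2 \<le> d\<^sup>2"
    using u(2) by (intro LIMSEQ_le) (auto intro: less_imp_le)
  hence "norm (x - p) \<le> d" using d0 by (rule power2_le_imp_le)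
  hence "norm (x - p) \<le> norm (x - m)" if "m \<in> M" for m using dle[OF that] by linarith
  thus ?thesis using closest_point_orthogonal[OF sub pM] pM by blast
qed

lemma oproj_unique:
  assumes sub: "csubspace M" and p: "p \<in> M" "\<forall>m\<in>M. cinner (g - p) m = 0"
    and p': "p' \<in> M" "\<forall>m\<in>M. cinner (g - p') m = 0"
  shows "p = p'"
proof -
  have d: "p' - p \<in> M" using csubspace_diff[OF sub p'(1) p(1)] .
  have "cinner (g - p) (p' - p) - cinner (g - p') (p' - p) = 0" using p(2) p'(2) d by simp
  hence "cinner (p' - p) (p' - p) = 0" unfolding cinner_diff_left[symmetric] by simp
  thus ?thesis by simp
qed

lemma oproj_orthogonal:
  assumes sub: "csubspace M" and cl: "closed M"
  shows "oproj M g \<in> M \<and> (\<forall>m\<in>M. cinner (g - oproj M g) m = 0)"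
proof -
  obtain p where p: "p \<in> M" "\<forall>m\<in>M. cinner (g - p) m = 0"
    using orthogonal_projection_exists[OF sub cl] by blast
  show ?thesis unfolding oproj_def
    by (rule theI[of _ p]) (use p oproj_unique[OF sub] in blast)+
qed

lemma oproj_eqI:
  assumes sub: "csubspace M" and cl: "closed M" and p: "p \<in> M" "\<forall>m\<in>M. cinner (g - p) m = 0"
  shows "oproj M g = p"
  using oproj_orthogonal[OF sub cl, of g] oproj_unique[OF sub] p by blast

section \<open>Linear relations and their adjoints\<close>

lemma linear_relation_zero: "linear_relation T \<Longrightarrow> (0, 0) \<in> T"
  unfolding linear_relation_def by fastforce

lemma linear_relation_add:
  "linear_relation T \<Longrightarrow> (a, b) \<in> T \<Longrightarrow> (c, d) \<in> T \<Longrightarrow> (a + c, b + d) \<in> T"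
  unfolding linear_relation_def by fastforce

lemma linear_relation_scaleC:
  "linear_relation T \<Longrightarrow> (a, b) \<in> T \<Longrightarrow> (scaleC r a, scaleC r b) \<in> T"
  unfolding linear_relation_def by fastforce

lemma linear_relation_diff:
  "linear_relation T \<Longrightarrow> (a, b) \<in> T \<Longrightarrow> (c, d) \<in> T \<Longrightarrow> (a - c, b - d) \<in> T"
  using linear_relation_add[of T a b "- c" "- d"] linear_relation_scaleC[of T c d "-1"]
  by (simp add: scaleC_minus_one)

lemma csubspace_iff_linear_relation: "csubspace T \<longleftrightarrow> linear_relation T"
  unfolding csubspace_def linear_relation_def zero_prod_def plus_prod_def scaleC_prod_def by simp

lemma rdomI: "(a, b) \<in> S \<Longrightarrow> a \<in> rdom S"
  unfolding rdom_def by blast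

lemma rdom_zero: "linear_relation S \<Longrightarrow> 0 \<in> rdom S"
  unfolding rdom_def using linear_relation_zero by blast

lemma rdom_add: "linear_relation S \<Longrightarrow> a \<in> rdom S \<Longrightarrow> b \<in> rdom S \<Longrightarrow> a + b \<in> rdom S"
  unfolding rdom_def using linear_relation_add by blast

lemma rdom_scaleC: "linear_relation S \<Longrightarrow> a \<in> rdom S \<Longrightarrow> scaleC r a \<in> rdom S"
  unfolding rdom_def using linear_relation_scaleC by blast

lemma rdom_diff: "linear_relation S \<Longrightarrow> a \<in> rdom S \<Longrightarrow> b \<in> rdom S \<Longrightarrow> a - b \<in> rdom S"
  unfolding rdom_def using linear_relation_diff by blast

lemma is_operator_linear_relation: "is_operator T \<Longrightarrow> linear_relation T"
  unfolding is_operator_def by blast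

lemma is_operator_single_valued:
  assumes op: "is_operator T" and "(f, g) \<in> T" "(f, g') \<in> T"
  shows "g = g'"
proof -
  have "(f - f, g - g') \<in> T"
    using linear_relation_diff assms is_operator_linear_relation by blast
  hence "g - g' \<in> rmul T" unfolding rmul_def by simp
  thus ?thesis using op unfolding is_operator_def by simp
qed

lemma is_operator_restrict_rdom:
  assumes K: "is_operator K" and H: "linear_relation H"
  shows "is_operator {p \<in> K. fst p \<in> rdom H}"
proof -
  let ?R = "{p \<in> K. fst p \<in> rdom H}"
  note K_lin = is_operator_linear_relation[OF K]
  have "linear_relation ?R" unfolding linear_relation_def
    using linear_relation_add[OF K_lin] linear_relation_scaleC[OF K_lin] linear_relation_zero[OF K_lin]
      rdom_add[OF H] rdom_scaleC[OF H] rdom_zero[OF H] by auto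
  moreover have "rmul ?R \<subseteq> rmul K" "0 \<in> rmul ?R"
    using linear_relation_zero[OF K_lin] rdom_zero[OF H] unfolding rmul_def by auto
  ultimately show ?thesis using K unfolding is_operator_def by blast
qed

lemma mem_adj_iff: "(h, k) \<in> adj T \<longleftrightarrow> (\<forall>f g. (f, g) \<in> T \<longrightarrow> cinner g h = cinner f k)"
  unfolding adj_def by auto

lemma linear_relation_adj: "linear_relation (adj T)"
  unfolding linear_relation_def by (auto simp: mem_adj_iff cinner_add_right cinner_scaleC_right)

lemma closed_adj: "closed (adj T)"
proof -
  have "adj T = (\<Inter>p\<in>T. {q. cinner (snd p) (fst q) = cinner (fst p) (snd q)})"
    by (force simp: mem_adj_iff)
  also have "closed \<dots>"
    by (intro closed_INT ballI closed_Collect_eq continuous_on_cinner continuous_intros)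
  finally show ?thesis .
qed

lemma adj_antimono: "T \<subseteq> T' \<Longrightarrow> adj T' \<subseteq> adj T"
  unfolding adj_def by auto

lemma subset_adj_adj: "T \<subseteq> adj (adj T)"
proof
  fix p assume p: "p \<in> T"
  obtain f g where fg: "p = (f, g)" by fastforce
  show "p \<in> adj (adj T)" unfolding fg
  proof (subst mem_adj_iff, intro allI impI)
    fix h k assume "(h, k) \<in> adj T"
    hence "cinner g h = cinner f k" using p fg mem_adj_iff by blast
    thus "cinner k f = cinner h g" by (metis cinner_commute)
  qed
qed

lemma adj_adj_adj: "adj (adj (adj T)) = adj T"
  using subset_adj_adj[of T] subset_adj_adj[of "adj T"] adj_antimono by blast

text \<open>An element of \<open>T**\<close> minus its projection onto \<open>T\<close> is orthogonal to \<open>T\<close>, which makes its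
  rotation \<open>{q, -p}\<close> an element of \<open>T*\<close>; pairing it with itself shows that it vanishes.\<close>

lemma adj_adj_eq:
  assumes lin: "linear_relation C" and cl: "closed C"
  shows "adj (adj C) = C"
proof
  show "adj (adj C) \<subseteq> C"
  proof
    fix z assume z: "z \<in> adj (adj C)"
    obtain x y where xy: "z = (x, y)" by fastforce
    obtain a b where pC: "(a, b) \<in> C" and orth: "\<forall>m\<in>C. cinner (z - (a, b)) m = 0"
      using orthogonal_projection_exists[of C z] lin cl by (auto simp: csubspace_iff_linear_relation)
    define p where "p = x - a"
    define q where "q = y - b"
    have "(q, - p) \<in> adj C" unfolding mem_adj_iff
    proof (intro allI impI)
      fix f g assume "(f, g) \<in> C"
      hence "cinner p f + cinner q g = 0"
        using orth unfolding xy p_def q_def by (auto simp: cinner_Pair)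
      hence "cinner q g = cinner (- p) f"
        by (simp add: cinner_minus_left eq_neg_iff_add_eq_0 add.commute)
      thus "cinner g q = cinner f (- p)" by (rule cinner_eq_commute)
    qed
    moreover have "(a, b) \<in> adj (adj C)" using pC subset_adj_adj by blast
    ultimately have "cinner (- p) x = cinner q y" "cinner (- p) a = cinner q b"
      using z unfolding xy mem_adj_iff by blast+
    hence "cinner (- p) (x - a) = cinner q (y - b)" unfolding cinner_diff_right by simp
    hence "- cinner p p = cinner q q"
      unfolding p_def[symmetric] q_def[symmetric] cinner_minus_left .
    hence "- (norm p)\<^sup>2 = (norm q)\<^sup>2" unfolding cinner_self
      by (metis of_real_eq_iff of_real_minus)
    hence "p = 0" "q = 0"
      by (smt (verit) norm_eq_zero zero_le_power2 zero_eq_power2)+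
    thus "z \<in> C" using pC xy unfolding p_def q_def by simp
  qed
qed (rule subset_adj_adj)

lemma adj_rmul_orthogonal_rdom: "(0, m) \<in> adj T \<Longrightarrow> (f, g) \<in> T \<Longrightarrow> cinner f m = 0"
  unfolding mem_adj_iff by (metis cinner_zero_right)

lemma adj_rdom_orthogonal_rmul: "(h, k) \<in> adj T \<Longrightarrow> (0, m) \<in> T \<Longrightarrow> cinner m h = 0"
  unfolding mem_adj_iff by (metis cinner_zero_left)

lemma adj_adj_subset_closed_operator:
  assumes K: "is_operator K" "closed K" and RK: "R \<subseteq> K"
  shows "adj (adj R) \<subseteq> K" "is_operator (adj (adj R))"
proof -
  show sub: "adj (adj R) \<subseteq> K"
    using adj_antimono[OF adj_antimono[OF RK]] adj_adj_eq[OF is_operator_linear_relation[OF K(1)] K(2)]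
    by simp
  have "rmul (adj (adj R)) \<subseteq> rmul K" using sub unfolding rmul_def by blast
  moreover have "0 \<in> rmul (adj (adj R))"
    using linear_relation_zero[OF linear_relation_adj] unfolding rmul_def by blast
  ultimately show "is_operator (adj (adj R))"
    using K(1) linear_relation_adj unfolding is_operator_def by blast
qed

lemma selfadjoint_linear_relation: "selfadjoint H \<Longrightarrow> linear_relation H"
  using linear_relation_adj unfolding selfadjoint_def by metis

lemma selfadjoint_cinner_sym:
  assumes "selfadjoint H" and "(b, b') \<in> H" and "(a, a') \<in> H"
  shows "cinner a' b = cinner a b'"
proof -
  have "(b, b') \<in> adj H" using assms(1,2) unfolding selfadjoint_def by simp
  thus ?thesis using assms(3) mem_adj_iff by blast
qed

section \<open>Products \<open>T* T\<close> and shifts\<close>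

lemma rprod_iff: "(f, h) \<in> rprod R T \<longleftrightarrow> (\<exists>g. (f, g) \<in> T \<and> (g, h) \<in> R)"
  unfolding rprod_def by auto

lemma rshift_iff: "(x, y) \<in> rshift c A \<longleftrightarrow> (x, y - scaleC (complex_of_real c) x) \<in> A"
  unfolding rshift_def by force

lemma adj_rshift: "adj (rshift c A) = rshift c (adj A)"
proof (rule set_eqI)
  fix z :: "'a \<times> 'a"
  obtain h k where z: "z = (h, k)" by fastforce
  let ?c = "complex_of_real c"
  have "z \<in> adj (rshift c A) \<longleftrightarrow> (\<forall>f g. (f, g) \<in> A \<longrightarrow> cinner (g + scaleC ?c f) h = cinner f k)"
    unfolding z mem_adj_iff rshift_iff
  proof (intro iffI allI impI)
    fix f g
    assume "\<forall>f g. (f, g - scaleC ?c f) \<in> A \<longrightarrow> cinner g h = cinner f k" and "(f, g) \<in> A"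
    thus "cinner (g + scaleC ?c f) h = cinner f k" by (metis add_diff_cancel_right')
  next
    fix f g
    assume "\<forall>f g. (f, g) \<in> A \<longrightarrow> cinner (g + scaleC ?c f) h = cinner f k"
      and "(f, g - scaleC ?c f) \<in> A"
    thus "cinner g h = cinner f k" by (metis diff_add_cancel)
  qed
  also have "\<dots> \<longleftrightarrow> (\<forall>f g. (f, g) \<in> A \<longrightarrow> cinner g h = cinner f (k - scaleC ?c h))"
    unfolding cinner_add_left cinner_diff_right cinner_scaleC_left cinner_scaleC_right
    by (simp add: eq_diff_eq)
  also have "\<dots> \<longleftrightarrow> z \<in> rshift c (adj A)" unfolding z rshift_iff mem_adj_iff ..
  finally show "z \<in> adj (rshift c A) \<longleftrightarrow> z \<in> rshift c (adj A)" .
qed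

lemma selfadjoint_rshift: "selfadjoint A \<Longrightarrow> selfadjoint (rshift c A)"
  unfolding selfadjoint_def adj_rshift by simp

text \<open>Projecting \<open>(h, 0)\<close> onto the graph of \<open>T\<close> writes \<open>h = f + p\<close> with \<open>{f, p} \<in> T* T\<close>.\<close>

lemma exists_adj_prod_sum:
  assumes lin: "linear_relation T" and cl: "closed T"
  shows "\<exists>f p. (f, p) \<in> rprod (adj T) T \<and> h = f + p"
proof -
  obtain f g where fg: "(f, g) \<in> T" and orth: "\<forall>m\<in>T. cinner ((h, 0) - (f, g)) m = 0"
    using orthogonal_projection_exists[of T "(h, 0)"] lin cl
    by (auto simp: csubspace_iff_linear_relation)
  have "(g, h - f) \<in> adj T" unfolding mem_adj_iff
  proof (intro allI impI)
    fix f' g' assume "(f', g') \<in> T"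
    hence "cinner (h - f) f' + cinner (- g) g' = 0"
      using orth[rule_format, of "(f', g')"] by (simp add: cinner_Pair)
    hence "cinner (h - f) f' = cinner g g'"
      unfolding cinner_minus_left by (simp add: add_eq_0_iff)
    thus "cinner g' g = cinner f' (h - f)" by (rule cinner_eq_commute[symmetric])
  qed
  hence "(f, h - f) \<in> rprod (adj T) T" unfolding rprod_iff using fg by blast
  thus ?thesis by force
qed

lemma adj_prod_subset_adj: "rprod (adj T) T \<subseteq> adj (rprod (adj T) T)"
proof
  fix z assume "z \<in> rprod (adj T) T"
  then obtain f p g where z: "z = (f, p)" and fg: "(f, g) \<in> T" and gp: "(g, p) \<in> adj T"
    unfolding rprod_def by blast
  show "z \<in> adj (rprod (adj T) T)" unfolding z mem_adj_iff
  proof (intro allI impI)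
    fix f' p' assume "(f', p') \<in> rprod (adj T) T"
    then obtain g' where fg': "(f', g') \<in> T" and gp': "(g', p') \<in> adj T"
      unfolding rprod_iff by blast
    have "cinner g g' = cinner f p'" using gp' fg mem_adj_iff by blast
    moreover have "cinner g' g = cinner f' p" using gp fg' mem_adj_iff by blast
    ultimately show "cinner p' f = cinner f' p" using cinner_eq_commute by metis
  qed
qed

text \<open>If \<open>{h, k} \<in> (T* T)*\<close>, write \<open>h + k = f + p\<close> with \<open>{f, p} \<in> T* T\<close>; then \<open>d = h - f\<close> satisfies
  \<open>{d, -d} \<in> (T* T)*\<close>, and writing \<open>d\<close> itself as such a sum shows \<open>(d, d) = 0\<close>.\<close>

lemma selfadjoint_adj_prod:
  assumes lin: "linear_relation T" and cl: "closed T"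
  shows "selfadjoint (rprod (adj T) T)"
proof -
  define A where "A = rprod (adj T) T"
  have sub: "A \<subseteq> adj A" unfolding A_def by (rule adj_prod_subset_adj)
  have "adj A \<subseteq> A"
  proof
    fix z assume z: "z \<in> adj A"
    obtain h k where hk: "z = (h, k)" by fastforce
    obtain f p where fp: "(f, p) \<in> A" and e: "h + k = f + p"
      using exists_adj_prod_sum[OF lin cl, of "h + k"] unfolding A_def by blast
    define d where "d = h - f"
    have "(h - f, k - p) \<in> adj A"
      using linear_relation_diff[OF linear_relation_adj] z hk fp sub by blast
    moreover have "k - p = - d" using e unfolding d_def by (simp add: algebra_simps)
    ultimately have dd: "(d, - d) \<in> adj A" unfolding d_def by simp
    obtain f' p' where fp': "(f', p') \<in> A" and d: "d = f' + p'"
      using exists_adj_prod_sum[OF lin cl, of d] unfolding A_def by blast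
    have "cinner p' d = cinner f' (- d)" using dd fp' mem_adj_iff by blast
    hence "cinner (f' + p') d = 0" by (simp add: cinner_add_left cinner_minus_right)
    hence "cinner d d = 0" using d by simp
    hence "h = f" "k = p" using e unfolding d_def by auto
    thus "z \<in> A" using fp hk by simp
  qed
  thus ?thesis using sub unfolding selfadjoint_def A_def by blast
qed

lemma cinner_adj_prod:
  assumes "(f, g) \<in> T" "(g, p) \<in> adj T"
  shows "cinner p f = complex_of_real ((norm g)\<^sup>2)"
proof -
  have "cinner g g = cinner f p" using assms mem_adj_iff by blast
  hence "cinner p f = cinner g g" by (rule cinner_eq_commute[symmetric])
  thus ?thesis by (simp add: cinner_self)
qed

lemma bounded_below_by_rshift_adj_prod: "bounded_below_by (rshift c (rprod (adj T) T)) c"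
  unfolding bounded_below_by_def
proof (clarify)
  fix x y assume "(x, y) \<in> rshift c (rprod (adj T) T)"
  then obtain g where xg: "(x, g) \<in> T" and gy: "(g, y - scaleC (complex_of_real c) x) \<in> adj T"
    unfolding rshift_iff rprod_iff by blast
  have "cinner y x = cinner (y - scaleC (complex_of_real c) x) x + complex_of_real c * cinner x x"
    by (simp add: cinner_diff_left cinner_scaleC_left)
  also have "\<dots> = complex_of_real ((norm g)\<^sup>2 + c * (norm x)\<^sup>2)"
    using cinner_adj_prod[OF xg gy] by (simp add: cinner_self)
  finally show "Im (cinner y x) = 0 \<and> c * (norm x)\<^sup>2 \<le> Re (cinner y x)" by simp
qed

section \<open>Regular parts\<close>

lemma csubspace_rmul: "linear_relation T \<Longrightarrow> csubspace (rmul T)"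
  unfolding csubspace_def rmul_def
  using linear_relation_add linear_relation_scaleC linear_relation_zero
  by (metis add_0 scaleC_zero_right mem_Collect_eq)

lemma closed_rmul:
  fixes T :: "('a::chilbert \<times> 'b::chilbert) set"
  assumes "closed T" shows "closed (rmul T)"
proof -
  have "rmul T = (\<lambda>g. (0, g)) -` T" unfolding rmul_def by auto
  also have "closed \<dots>" by (rule continuous_closed_vimage[OF assms]) (intro continuous_intros)
  finally show ?thesis .
qed

context
  fixes T :: "('a::chilbert \<times> 'b::chilbert) set"
  assumes lin: "linear_relation T" and cl: "closed T"
begin

lemma mem_rreg_iff: "(f, g) \<in> rreg T \<longleftrightarrow> (f, g) \<in> T \<and> (\<forall>m\<in>rmul T. cinner g m = 0)"
proof
  let ?\<pi> = "oproj (rmul T)"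
  note proj = oproj_orthogonal[OF csubspace_rmul[OF lin] closed_rmul[OF cl]]
  assume "(f, g) \<in> rreg T"
  then obtain g0 where g0: "(f, g0) \<in> T" and g: "g = g0 - ?\<pi> g0"
    unfolding rreg_def by blast
  have "(0, ?\<pi> g0) \<in> T" using proj[of g0] unfolding rmul_def by simp
  hence "(f - 0, g0 - ?\<pi> g0) \<in> T" using linear_relation_diff[OF lin g0] by blast
  thus "(f, g) \<in> T \<and> (\<forall>m\<in>rmul T. cinner g m = 0)" using g proj[of g0] by simp
next
  assume fg: "(f, g) \<in> T \<and> (\<forall>m\<in>rmul T. cinner g m = 0)"
  have "0 \<in> rmul T" using linear_relation_zero[OF lin] unfolding rmul_def by simp
  hence "oproj (rmul T) g = 0"
    using oproj_eqI[OF csubspace_rmul[OF lin] closed_rmul[OF cl]] fg by simp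
  thus "(f, g) \<in> rreg T" unfolding rreg_def using fg by force
qed

lemma rreg_subset: "rreg T \<subseteq> T"
  using mem_rreg_iff by auto

lemma closed_rreg: "closed (rreg T)"
proof -
  have "rreg T = T \<inter> (\<Inter>m\<in>rmul T. {p. cinner (snd p) m = 0})"
    using mem_rreg_iff by auto
  also have "closed \<dots>"
    by (intro closed_Int cl closed_INT ballI closed_Collect_eq continuous_on_cinner continuous_intros)
  finally show ?thesis .
qed

lemma is_operator_rreg: "is_operator (rreg T)"
proof -
  have "linear_relation (rreg T)" unfolding linear_relation_def
    using linear_relation_add[OF lin] linear_relation_scaleC[OF lin] linear_relation_zero[OF lin]
    by (auto simp: mem_rreg_iff cinner_add_left cinner_scaleC_left)
  moreover have "rmul (rreg T) = {0}"
  proof -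
    have "k = 0" if "(0, k) \<in> rreg T" for k
    proof -
      have "k \<in> rmul T" "\<forall>m\<in>rmul T. cinner k m = 0"
        using that unfolding mem_rreg_iff rmul_def by auto
      thus ?thesis using cinner_self_eq_0 by blast
    qed
    thus ?thesis using linear_relation_zero[OF lin] unfolding rmul_def by (auto simp: mem_rreg_iff)
  qed
  ultimately show ?thesis unfolding is_operator_def by blast
qed

text \<open>Passing to the regular part does not change \<open>T* T\<close>: \<open>dom T*\<close> is orthogonal to \<open>mul T\<close>.\<close>

lemma adj_prod_rreg: "rprod (adj (rreg T)) (rreg T) = rprod (adj T) T"
proof (rule set_eqI, clarify)
  fix f h
  let ?\<pi> = "oproj (rmul T)"
  note proj = oproj_orthogonal[OF csubspace_rmul[OF lin] closed_rmul[OF cl]]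
  show "(f, h) \<in> rprod (adj (rreg T)) (rreg T) \<longleftrightarrow> (f, h) \<in> rprod (adj T) T"
  proof
    assume "(f, h) \<in> rprod (adj (rreg T)) (rreg T)"
    then obtain g where fg: "(f, g) \<in> rreg T" and gh: "(g, h) \<in> adj (rreg T)"
      unfolding rprod_iff by blast
    have "(g, h) \<in> adj T" unfolding mem_adj_iff
    proof (intro allI impI)
      fix f' g' assume fg': "(f', g') \<in> T"
      have "(f', g' - ?\<pi> g') \<in> rreg T" unfolding rreg_def using fg' by blast
      hence "cinner (g' - ?\<pi> g') g = cinner f' h" using gh mem_adj_iff by blast
      moreover have "cinner (?\<pi> g') g = 0"
        using fg proj[of g'] unfolding mem_rreg_iff
        by (auto intro: cinner_eq_commute[of g _ 0 0, simplified])
      ultimately show "cinner g' g = cinner f' h" by (simp add: cinner_diff_left)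
    qed
    thus "(f, h) \<in> rprod (adj T) T" unfolding rprod_iff using fg rreg_subset by blast
  next
    assume "(f, h) \<in> rprod (adj T) T"
    then obtain g where fg: "(f, g) \<in> T" and gh: "(g, h) \<in> adj T"
      unfolding rprod_iff by blast
    have "cinner g m = 0" if "m \<in> rmul T" for m
      using adj_rdom_orthogonal_rmul[OF gh, of m] that unfolding rmul_def
      by (auto intro: cinner_eq_commute[of m g 0 0, simplified])
    hence "(f, g) \<in> rreg T" unfolding mem_rreg_iff using fg by blast
    moreover have "(g, h) \<in> adj (rreg T)" using gh adj_antimono[OF rreg_subset] by blast
    ultimately show "(f, h) \<in> rprod (adj (rreg T)) (rreg T)" unfolding rprod_iff by blast
  qed
qed

end

section \<open>The closed form of \<open>c + T* T\<close>\<close>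

definition double_null :: "(nat \<Rightarrow> nat \<Rightarrow> real) \<Rightarrow> bool" where
  "double_null a \<longleftrightarrow> (\<forall>e>0. \<exists>N. \<forall>m\<ge>N. \<forall>n\<ge>N. a n m < e)"

lemma form_approx_iff:
  "form_approx t u x \<longleftrightarrow> (\<forall>n. u n \<in> fst t) \<and> u \<longlonglongrightarrow> x \<and>
     double_null (\<lambda>n m. cmod (snd t (u n - u m) (u n - u m)))"
  unfolding form_approx_def double_null_def ..

lemma double_null_bound:
  assumes a: "double_null a" and b: "double_null b" and c: "\<And>n m. c n m \<le> a n m + b n m"
  shows "double_null c"
  unfolding double_null_def
proof (intro allI impI)
  fix e :: real assume "e > 0"
  hence "e / 2 > 0" by simp
  then obtain N1 N2 where N1: "\<forall>m\<ge>N1. \<forall>n\<ge>N1. a n m < e / 2"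
    and N2: "\<forall>m\<ge>N2. \<forall>n\<ge>N2. b n m < e / 2"
    using a b unfolding double_null_def by blast
  have "c n m < e" if "m \<ge> max N1 N2" "n \<ge> max N1 N2" for m n
  proof -
    have "a n m < e / 2" "b n m < e / 2" using N1 N2 that by auto
    thus ?thesis using c[of n m] by linarith
  qed
  thus "\<exists>N. \<forall>m\<ge>N. \<forall>n\<ge>N. c n m < e" by blast
qed

lemma double_null_scale:
  assumes a: "double_null a" and nonneg: "\<And>n m. 0 \<le> a n m" and r: "r \<ge> 0"
  shows "double_null (\<lambda>n m. r * a n m)"
  unfolding double_null_def
proof (intro allI impI)
  fix e :: real assume e: "e > 0"
  hence "e / (r + 1) > 0" using r by simp
  then obtain N where N: "\<forall>m\<ge>N. \<forall>n\<ge>N. a n m < e / (r + 1)"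
    using a unfolding double_null_def by blast
  have "r * a n m < e" if "m \<ge> N" "n \<ge> N" for m n
  proof -
    have "r * a n m \<le> (r + 1) * a n m" using nonneg[of n m] by (simp add: algebra_simps)
    also have "\<dots> < e" using N that r by (simp add: pos_less_divide_eq mult.commute)
    finally show ?thesis .
  qed
  thus "\<exists>N. \<forall>m\<ge>N. \<forall>n\<ge>N. r * a n m < e" by blast
qed

lemma Cauchy_iff_double_null:
  fixes w :: "nat \<Rightarrow> 'a::real_normed_vector"
  shows "Cauchy w \<longleftrightarrow> double_null (\<lambda>n m. (norm (w n - w m))\<^sup>2)"
proof
  assume w: "Cauchy w"
  show "double_null (\<lambda>n m. (norm (w n - w m))\<^sup>2)" unfolding double_null_def
  proof (intro allI impI)
    fix e :: real assume e: "e > 0"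
    then obtain N where N: "\<forall>n\<ge>N. \<forall>m\<ge>N. norm (w n - w m) < sqrt e"
      using CauchyD[OF w, of "sqrt e"] by auto
    have "(norm (w n - w m))\<^sup>2 < e" if "m \<ge> N" "n \<ge> N" for m n
    proof -
      have "norm (w n - w m) < sqrt e" using N that by blast
      hence "(norm (w n - w m))\<^sup>2 < (sqrt e)\<^sup>2" by (intro power_strict_mono) auto
      thus ?thesis using e by simp
    qed
    thus "\<exists>N. \<forall>m\<ge>N. \<forall>n\<ge>N. (norm (w n - w m))\<^sup>2 < e" by blast
  qed
next
  assume w: "double_null (\<lambda>n m. (norm (w n - w m))\<^sup>2)"
  show "Cauchy w"
  proof (rule CauchyI)
    fix e :: real assume e: "e > 0"
    hence "e\<^sup>2 > 0" by simp
    then obtain N where N: "\<forall>m\<ge>N. \<forall>n\<ge>N. (norm (w n - w m))\<^sup>2 < e\<^sup>2"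
      using w unfolding double_null_def by blast
    have "norm (w m - w n) < e" if "m \<ge> N" "n \<ge> N" for m n
    proof -
      have "(norm (w m - w n))\<^sup>2 < e\<^sup>2" using N that by blast
      thus ?thesis using e power2_less_imp_less[of "norm (w m - w n)" e] by simp
    qed
    thus "\<exists>M. \<forall>m\<ge>M. \<forall>n\<ge>M. norm (w m - w n) < e" by blast
  qed
qed

lemma rform_fst [simp]: "fst (rform S) = rdom S"
  unfolding rform_def by simp

lemma rform_snd: "snd (rform S) \<phi> \<psi> = cinner (SOME \<phi>'. (\<phi>, \<phi>') \<in> S) \<psi>"
  unfolding rform_def by simp

lemma rform_some: "\<phi> \<in> rdom S \<Longrightarrow> (\<phi>, SOME \<phi>'. (\<phi>, \<phi>') \<in> S) \<in> S"
  unfolding rdom_def by (auto intro: someI)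

lemma closed_form_fst: "fst (closed_form S) = {x. \<exists>u. form_approx (rform S) u x}"
  unfolding closed_form_def form_closure_def by simp

lemma closed_form_snd: "snd (closed_form S) x y =
   lim (\<lambda>n. snd (rform S) ((SOME u. form_approx (rform S) u x) n) ((SOME u. form_approx (rform S) u y) n))"
  unfolding closed_form_def form_closure_def by simp

lemma form_approx_some:
  "x \<in> fst (closed_form S) \<Longrightarrow> form_approx (rform S) (SOME u. form_approx (rform S) u x) x"
  unfolding closed_form_fst by (metis (mono_tags, lifting) mem_Collect_eq someI)

text \<open>The paper's \<open>c + R* R**\<close> is \<open>shifted_gram c (R**)\<close>, since \<open>R* = R***\<close>.\<close>

definition shifted_gram :: "real \<Rightarrow> ('a::chilbert \<times> 'b::chilbert) set \<Rightarrow> ('a \<times> 'a) set" where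
  "shifted_gram c T = rshift c (rprod (adj T) T)"

lemma selfadjoint_shifted_gram:
  "linear_relation T \<Longrightarrow> closed T \<Longrightarrow> selfadjoint (shifted_gram c T)"
  unfolding shifted_gram_def by (intro selfadjoint_rshift selfadjoint_adj_prod)

lemma linear_relation_shifted_gram:
  "linear_relation T \<Longrightarrow> closed T \<Longrightarrow> linear_relation (shifted_gram c T)"
  by (rule selfadjoint_linear_relation[OF selfadjoint_shifted_gram])

lemma rdom_shifted_gram_subset: "rdom (shifted_gram c T) \<subseteq> rdom T"
  unfolding shifted_gram_def rdom_def rshift_iff rprod_iff by blast

context
  fixes T :: "('a::chilbert \<times> 'b::chilbert) set" and c :: real
  assumes cl: "closed T" and op: "is_operator T"
begin

private lemmas lin = is_operator_linear_relation[OF op]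
private lemmas lin_gram = linear_relation_shifted_gram[OF lin cl, of c]

lemma rform_shifted_gram:
  assumes "(\<phi>, g) \<in> T" "(\<psi>, b) \<in> T" "\<phi> \<in> rdom (shifted_gram c T)"
  shows "snd (rform (shifted_gram c T)) \<phi> \<psi> = complex_of_real c * cinner \<phi> \<psi> + cinner g b"
proof -
  define \<phi>' where "\<phi>' = (SOME \<phi>'. (\<phi>, \<phi>') \<in> shifted_gram c T)"
  have "(\<phi>, \<phi>') \<in> shifted_gram c T" using rform_some[OF assms(3)] \<phi>'_def by simp
  then obtain g' where g': "(\<phi>, g') \<in> T" "(g', \<phi>' - scaleC (complex_of_real c) \<phi>) \<in> adj T"
    unfolding shifted_gram_def rshift_iff rprod_iff by blast
  have "g' = g" using is_operator_single_valued[OF op g'(1) assms(1)] .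
  hence "cinner b g = cinner \<psi> (\<phi>' - scaleC (complex_of_real c) \<phi>)"
    using g'(2) assms(2) mem_adj_iff by blast
  hence "cinner (\<phi>' - scaleC (complex_of_real c) \<phi>) \<psi> = cinner g b"
    by (rule cinner_eq_commute[symmetric])
  hence "cinner \<phi>' \<psi> = complex_of_real c * cinner \<phi> \<psi> + cinner g b"
    unfolding cinner_diff_left cinner_scaleC_left by (simp add: algebra_simps)
  thus ?thesis unfolding rform_snd \<phi>'_def .
qed

lemma rform_shifted_gram_diff:
  assumes "(u, w) \<in> T" "(u', w') \<in> T" "u \<in> rdom (shifted_gram c T)" "u' \<in> rdom (shifted_gram c T)"
  shows "snd (rform (shifted_gram c T)) (u - u') (u - u')
           = complex_of_real (c * (norm (u - u'))\<^sup>2 + (norm (w - w'))\<^sup>2)"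
proof -
  have "(u - u', w - w') \<in> T" using linear_relation_diff[OF lin assms(1,2)] .
  thus ?thesis using rform_shifted_gram rdom_diff[OF lin_gram assms(3,4)]
    by (simp add: cinner_self)
qed

text \<open>A form Cauchy sequence in \<open>dom (c + T* T)\<close> is Cauchy in the graph norm of \<open>T\<close>.\<close>

lemma form_approx_graph_limit:
  assumes ap: "form_approx (rform (shifted_gram c T)) u x" and w: "\<And>n. (u n, w n) \<in> T"
  shows "\<exists>a. (x, a) \<in> T \<and> w \<longlonglongrightarrow> a"
proof -
  let ?t = "\<lambda>n m. snd (rform (shifted_gram c T)) (u n - u m) (u n - u m)"
  have uA: "\<And>n. u n \<in> rdom (shifted_gram c T)" and ux: "u \<longlonglongrightarrow> x"
    and t: "double_null (\<lambda>n m. cmod (?t n m))"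
    using ap unfolding form_approx_iff by simp_all
  have bound: "(norm (w n - w m))\<^sup>2 \<le> cmod (?t n m) + \<bar>c\<bar> * (norm (u n - u m))\<^sup>2" for n m
  proof -
    let ?a = "c * (norm (u n - u m))\<^sup>2" and ?b = "(norm (w n - w m))\<^sup>2"
    have "cmod (?t n m) = \<bar>?a + ?b\<bar>"
      unfolding rform_shifted_gram_diff[OF w w uA uA] by (simp only: norm_of_real)
    moreover have "?a + ?b \<le> \<bar>?a + ?b\<bar>" "- ?a \<le> \<bar>?a\<bar>" by (rule abs_ge_self, rule abs_ge_minus_self)
    moreover have "\<bar>?a\<bar> = \<bar>c\<bar> * (norm (u n - u m))\<^sup>2" by (simp add: abs_mult)
    ultimately show ?thesis by linarith
  qed
  have "double_null (\<lambda>n m. \<bar>c\<bar> * (norm (u n - u m))\<^sup>2)"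
    using LIMSEQ_imp_Cauchy[OF ux] by (intro double_null_scale) (auto simp: Cauchy_iff_double_null)
  hence "Cauchy w"
    unfolding Cauchy_iff_double_null using double_null_bound[OF t _ bound] by blast
  then obtain a where wa: "w \<longlonglongrightarrow> a" using Cauchy_convergent_iff convergent_def by blast
  have "(\<lambda>n. (u n, w n)) \<longlonglongrightarrow> (x, a)" using ux wa by (rule tendsto_Pair)
  hence "(x, a) \<in> T" by (rule closed_sequentially[OF cl w])
  thus ?thesis using wa by blast
qed

lemma closed_form_shifted_gram_subset: "fst (closed_form (shifted_gram c T)) \<subseteq> rdom T"
proof
  fix x assume "x \<in> fst (closed_form (shifted_gram c T))"
  then obtain u where ap: "form_approx (rform (shifted_gram c T)) u x" unfolding closed_form_fst by blast
  have "u n \<in> rdom (shifted_gram c T)" for n using ap unfolding form_approx_iff by simp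
  hence "u n \<in> rdom T" for n using rdom_shifted_gram_subset by blast
  hence "\<forall>n. \<exists>g. (u n, g) \<in> T" unfolding rdom_def by blast
  then obtain w where "\<And>n. (u n, w n) \<in> T" by metis
  thus "x \<in> rdom T" using form_approx_graph_limit[OF ap] unfolding rdom_def by blast
qed

lemma closed_form_shifted_gram_value:
  assumes x: "x \<in> fst (closed_form (shifted_gram c T))" and y: "y \<in> fst (closed_form (shifted_gram c T))"
    and a: "(x, a) \<in> T" and b: "(y, b) \<in> T"
  shows "snd (closed_form (shifted_gram c T)) x y = complex_of_real c * cinner x y + cinner a b"
proof -
  define u where "u = (SOME u. form_approx (rform (shifted_gram c T)) u x)"
  define v where "v = (SOME u. form_approx (rform (shifted_gram c T)) u y)"
  have apu: "form_approx (rform (shifted_gram c T)) u x"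
    and apv: "form_approx (rform (shifted_gram c T)) v y"
    unfolding u_def v_def using form_approx_some x y by blast+
  have uA: "\<And>n. u n \<in> rdom (shifted_gram c T)" and ux: "u \<longlonglongrightarrow> x"
    and vA: "\<And>n. v n \<in> rdom (shifted_gram c T)" and vy: "v \<longlonglongrightarrow> y"
    using apu apv unfolding form_approx_iff by auto
  have "\<forall>n. \<exists>g. (u n, g) \<in> T" "\<forall>n. \<exists>g. (v n, g) \<in> T"
    using uA vA rdom_shifted_gram_subset unfolding rdom_def by blast+
  then obtain w z where w: "\<And>n. (u n, w n) \<in> T" and z: "\<And>n. (v n, z n) \<in> T" by metis
  obtain a' b' where a': "(x, a') \<in> T" "w \<longlonglongrightarrow> a'" and b': "(y, b') \<in> T" "z \<longlonglongrightarrow> b'"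
    using form_approx_graph_limit[OF apu w] form_approx_graph_limit[OF apv z] by blast
  have "a' = a" "b' = b" using is_operator_single_valued[OF op] a a' b b' by blast+
  hence "(\<lambda>n. complex_of_real c * cinner (u n) (v n) + cinner (w n) (z n))
        \<longlonglongrightarrow> complex_of_real c * cinner x y + cinner a b"
    using a'(2) b'(2) ux vy by (intro tendsto_intros tendsto_cinner) auto
  hence "(\<lambda>n. snd (rform (shifted_gram c T)) (u n) (v n)) \<longlonglongrightarrow> complex_of_real c * cinner x y + cinner a b"
    using rform_shifted_gram[OF w z uA] by simp
  thus ?thesis unfolding closed_form_snd u_def[symmetric] v_def[symmetric] by (rule limI)
qed

text \<open>\<open>dom (T* T)\<close> is a core for \<open>T\<close>: a graph element orthogonal to all \<open>{f, g} \<in> T\<close> with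
  \<open>f \<in> dom (T* T)\<close> is orthogonal in its first component to all \<open>f + T* T f\<close>, hence to everything.\<close>

lemma graph_subset_closure_core:
  "T \<subseteq> closure {p \<in> T. fst p \<in> rdom (shifted_gram c T)}"
proof
  define G where "G = {p \<in> T. fst p \<in> rdom (shifted_gram c T)}"
  have "csubspace G" unfolding G_def csubspace_def
    using linear_relation_zero[OF lin] rdom_zero[OF lin_gram] linear_relation_add[OF lin]
      rdom_add[OF lin_gram] linear_relation_scaleC[OF lin] rdom_scaleC[OF lin_gram]
    by (auto simp: zero_prod_def plus_prod_def scaleC_prod_def)
  hence sub: "csubspace (closure G)" by (rule csubspace_closure)
  have GT: "closure G \<subseteq> T" unfolding G_def by (rule closure_minimal[OF _ cl]) auto
  fix z assume zT: "z \<in> T"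
  obtain P where PG: "P \<in> closure G" and orth: "\<forall>m\<in>closure G. cinner (z - P) m = 0"
    using orthogonal_projection_exists[OF sub closed_closure] by blast
  obtain d1 d2 where d: "z - P = (d1, d2)" by fastforce
  have dT: "(d1, d2) \<in> T"
  proof -
    obtain z1 z2 p1 p2 where "z = (z1, z2)" "P = (p1, p2)" by fastforce
    moreover have "P \<in> T" using PG GT by blast
    ultimately show ?thesis using linear_relation_diff[OF lin] zT d by auto
  qed
  have "cinner d1 h = 0" for h
  proof -
    obtain f p g where fg: "(f, g) \<in> T" and gp: "(g, p) \<in> adj T" and h: "h = f + p"
      using exists_adj_prod_sum[OF lin cl] unfolding rprod_iff by blast
    have "(f, p + scaleC (complex_of_real c) f) \<in> shifted_gram c T"
      unfolding shifted_gram_def rshift_iff rprod_iff using fg gp by auto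
    hence "(f, g) \<in> G" unfolding G_def using fg rdomI by fastforce
    hence "(f, g) \<in> closure G" using closure_subset by blast
    hence "cinner (d1, d2) (f, g) = 0" using orth d by metis
    hence "cinner d1 f + cinner d2 g = 0" by (simp add: cinner_Pair)
    moreover have "cinner d2 g = cinner d1 p" using gp dT mem_adj_iff by blast
    ultimately show ?thesis unfolding h cinner_add_right by simp
  qed
  hence "d1 = 0" using cinner_self_eq_0 by blast
  hence "d2 \<in> rmul T" using dT unfolding rmul_def by simp
  hence "d2 = 0" using op unfolding is_operator_def by simp
  hence "z = P" using d \<open>d1 = 0\<close> by (simp add: zero_prod_def[symmetric])
  thus "z \<in> closure G" using PG by simp
qed

lemma rdom_subset_closed_form_shifted_gram: "rdom T \<subseteq> fst (closed_form (shifted_gram c T))"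
proof
  fix x assume "x \<in> rdom T"
  then obtain a where "(x, a) \<in> T" unfolding rdom_def by blast
  hence "(x, a) \<in> closure {p \<in> T. fst p \<in> rdom (shifted_gram c T)}"
    using graph_subset_closure_core by blast
  then obtain s where s: "\<forall>n. s n \<in> {p \<in> T. fst p \<in> rdom (shifted_gram c T)}" "s \<longlonglongrightarrow> (x, a)"
    unfolding closure_sequential by blast
  define u where "u = (\<lambda>n. fst (s n))"
  define w where "w = (\<lambda>n. snd (s n))"
  have uw: "(u n, w n) \<in> T" "u n \<in> rdom (shifted_gram c T)" for n
    using s(1) unfolding u_def w_def by auto
  have ux: "u \<longlonglongrightarrow> x" and wa: "w \<longlonglongrightarrow> a"
    unfolding u_def w_def using tendsto_fst[OF s(2)] tendsto_snd[OF s(2)] by simp_all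
  let ?t = "\<lambda>n m. snd (rform (shifted_gram c T)) (u n - u m) (u n - u m)"
  have bound: "cmod (?t n m) \<le> \<bar>c\<bar> * (norm (u n - u m))\<^sup>2 + (norm (w n - w m))\<^sup>2" for n m
  proof -
    have "cmod (?t n m) = \<bar>c * (norm (u n - u m))\<^sup>2 + (norm (w n - w m))\<^sup>2\<bar>"
      unfolding rform_shifted_gram_diff[OF uw(1) uw(1) uw(2) uw(2)] by (simp only: norm_of_real)
    also have "\<dots> \<le> \<bar>c * (norm (u n - u m))\<^sup>2\<bar> + \<bar>(norm (w n - w m))\<^sup>2\<bar>"
      by (rule abs_triangle_ineq)
    finally show ?thesis by (simp add: abs_mult)
  qed
  have scaled: "double_null (\<lambda>n m. \<bar>c\<bar> * (norm (u n - u m))\<^sup>2)"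
    using LIMSEQ_imp_Cauchy[OF ux] by (intro double_null_scale) (auto simp: Cauchy_iff_double_null)
  have "double_null (\<lambda>n m. (norm (w n - w m))\<^sup>2)"
    using LIMSEQ_imp_Cauchy[OF wa] by (simp add: Cauchy_iff_double_null)
  hence "double_null (\<lambda>n m. cmod (?t n m))" using double_null_bound[OF scaled _ bound] by blast
  hence "form_approx (rform (shifted_gram c T)) u x" unfolding form_approx_iff using uw ux by simp
  thus "x \<in> fst (closed_form (shifted_gram c T))" unfolding closed_form_fst by blast
qed

lemma closed_form_shifted_gram_fst: "fst (closed_form (shifted_gram c T)) = rdom T"
  using closed_form_shifted_gram_subset rdom_subset_closed_form_shifted_gram by blast

end

lemma form_incl_closed_form_shifted_gram:
  assumes T1: "closed T1" "is_operator T1" and T2: "closed T2" "is_operator T2" and sub: "T1 \<subseteq> T2"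
  shows "form_incl (closed_form (shifted_gram c T1)) (closed_form (shifted_gram c T2))"
  unfolding form_incl_def closed_form_shifted_gram_fst[OF T1] closed_form_shifted_gram_fst[OF T2]
proof (intro conjI ballI)
  show "rdom T1 \<subseteq> rdom T2" using sub unfolding rdom_def by blast
  fix x y assume "x \<in> rdom T1" "y \<in> rdom T1"
  then obtain a b where ab: "(x, a) \<in> T1" "(y, b) \<in> T1" unfolding rdom_def by blast
  hence ab2: "(x, a) \<in> T2" "(y, b) \<in> T2" using sub by auto
  have x1: "x \<in> fst (closed_form (shifted_gram c T1))" and y1: "y \<in> fst (closed_form (shifted_gram c T1))"
    and x2: "x \<in> fst (closed_form (shifted_gram c T2))" and y2: "y \<in> fst (closed_form (shifted_gram c T2))"
    unfolding closed_form_shifted_gram_fst[OF T1] closed_form_shifted_gram_fst[OF T2]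
    using rdomI[OF ab(1)] rdomI[OF ab(2)] rdomI[OF ab2(1)] rdomI[OF ab2(2)] by simp_all
  show "snd (closed_form (shifted_gram c T2)) x y = snd (closed_form (shifted_gram c T1)) x y"
    unfolding closed_form_shifted_gram_value[OF T1 x1 y1 ab] closed_form_shifted_gram_value[OF T2 x2 y2 ab2] ..
qed

lemma cmod_sq_le_of_quadratic_nonneg:
  fixes \<alpha> \<gamma> :: real and \<beta> :: complex
  assumes H: "\<And>l. 0 \<le> \<alpha> + 2 * Re (cnj l * \<beta>) + (cmod l)\<^sup>2 * \<gamma>" and g: "\<gamma> \<ge> 0"
  shows "(cmod \<beta>)\<^sup>2 \<le> \<alpha> * \<gamma>"
proof (cases "\<gamma> > 0")
  case True
  define l where "l = - \<beta> / complex_of_real \<gamma>"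
  have bb: "cnj \<beta> * \<beta> = complex_of_real ((cmod \<beta>)\<^sup>2)" using complex_norm_square[of \<beta>] by (simp add: mult.commute)
  have "cnj l * \<beta> = - complex_of_real ((cmod \<beta>)\<^sup>2 / \<gamma>)"
    unfolding l_def using bb by (simp add: field_simps)
  hence r1: "Re (cnj l * \<beta>) = - (cmod \<beta>)\<^sup>2 / \<gamma>" by simp
  have r2: "(cmod l)\<^sup>2 * \<gamma> = (cmod \<beta>)\<^sup>2 / \<gamma>"
    unfolding l_def using True by (simp add: norm_divide power_divide power2_eq_square)
  have "0 \<le> \<alpha> - (cmod \<beta>)\<^sup>2 / \<gamma>" using H[of l] unfolding r1 r2 by simp
  thus ?thesis using True by (simp add: field_simps)
next
  case False
  hence g0: "\<gamma> = 0" using g by simp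
  have a0: "\<alpha> \<ge> 0" using H[of 0] by simp
  show ?thesis
  proof (cases "\<beta> = 0")
    case True thus ?thesis using g0 by simp
  next
    case False
    define r where "r = (\<alpha> + 1) / (cmod \<beta>)\<^sup>2"
    have bb: "cnj \<beta> * \<beta> = complex_of_real ((cmod \<beta>)\<^sup>2)" using complex_norm_square[of \<beta>] by (simp add: mult.commute)
    have "cnj (- complex_of_real r * \<beta>) * \<beta> = - complex_of_real (r * (cmod \<beta>)\<^sup>2)"
      using bb by (simp add: mult.assoc)
    hence "Re (cnj (- complex_of_real r * \<beta>) * \<beta>) = - (\<alpha> + 1)"
      unfolding r_def using False by simp
    thus ?thesis using H[of "- complex_of_real r * \<beta>"] g0 a0 by simp
  qed
qed

section \<open>The closed form of a semibounded selfadjoint relation\<close>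

text \<open>\<open>mul H\<close> is orthogonal to \<open>dom H\<close>, so the choice of \<open>\<phi>'\<close> in \<open>rform\<close> is immaterial.\<close>

lemma rform_selfadjoint:
  assumes sa: "selfadjoint H" and a: "(a, a') \<in> H" and b: "b \<in> rdom H"
  shows "snd (rform H) a b = cinner a' b"
proof -
  define p where "p = (SOME a'. (a, a') \<in> H)"
  obtain b' where b': "(b, b') \<in> H" using b unfolding rdom_def by blast
  have "(a, p) \<in> H" using rform_some[OF rdomI[OF a]] p_def by simp
  hence "(a - a, p - a') \<in> H" using linear_relation_diff[OF selfadjoint_linear_relation[OF sa] _ a] by blast
  hence "cinner (p - a') b = 0" using selfadjoint_cinner_sym[OF sa b'] by fastforce
  thus ?thesis unfolding rform_snd p_def[symmetric] cinner_diff_left by simp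
qed

lemma form_approx_const: "a \<in> rdom S \<Longrightarrow> form_approx (rform S) (\<lambda>n. a) a"
  unfolding form_approx_iff double_null_def by (simp add: rform_snd)

text \<open>For \<open>{a, a'} \<in> H\<close> this is \<open>t_H[a, b] - c (a, b)\<close>, the form of \<open>H - c\<close>.\<close>

definition shifted_inner :: "real \<Rightarrow> 'a::chilbert \<Rightarrow> 'a \<Rightarrow> 'a \<Rightarrow> complex" where
  "shifted_inner c a a' b = cinner (a' - scaleC (complex_of_real c) a) b"

lemma shifted_inner_add_left:
  "shifted_inner c (a + b) (a' + b') z = shifted_inner c a a' z + shifted_inner c b b' z"
  unfolding shifted_inner_def scaleC_add_right
  by (simp add: cinner_add_left cinner_diff_left algebra_simps)

lemma shifted_inner_scaleC_left:
  "shifted_inner c (scaleC l b) (scaleC l b') z = l * shifted_inner c b b' z"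
proof -
  have "scaleC l b' - scaleC (complex_of_real c) (scaleC l b)
      = scaleC l (b' - scaleC (complex_of_real c) b)"
    unfolding scaleC_diff_right scaleC_scaleC by (simp add: mult.commute)
  thus ?thesis unfolding shifted_inner_def by (simp add: cinner_scaleC_left)
qed

lemma shifted_inner_add_right: "shifted_inner c a a' (y + z) = shifted_inner c a a' y + shifted_inner c a a' z"
  unfolding shifted_inner_def by (rule cinner_add_right)

lemma shifted_inner_scaleC_right: "shifted_inner c a a' (scaleC l z) = cnj l * shifted_inner c a a' z"
  unfolding shifted_inner_def by (rule cinner_scaleC_right)

context
  fixes H :: "('a::chilbert \<times> 'a) set" and c :: real
  assumes sa: "selfadjoint H" and bb: "bounded_below_by H c"
begin

private lemmas H_lin = selfadjoint_linear_relation[OF sa]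

lemma shifted_inner_commute:
  assumes a: "(a, a') \<in> H" and b: "(b, b') \<in> H"
  shows "shifted_inner c b b' a = cnj (shifted_inner c a a' b)"
proof -
  have "cinner b' a = cinner b a'" using selfadjoint_cinner_sym[OF sa a b] .
  thus ?thesis unfolding shifted_inner_def cinner_diff_left cinner_scaleC_left
    by (simp add: cinner_commute[of a' b] cinner_commute[of a b])
qed

lemma shifted_inner_self:
  assumes a: "(a, a') \<in> H"
  shows "shifted_inner c a a' a = complex_of_real (Re (shifted_inner c a a' a))
    \<and> Re (shifted_inner c a a' a) \<ge> 0"
proof -
  have i: "Im (cinner a' a) = 0" and r: "Re (cinner a' a) \<ge> c * (norm a)\<^sup>2"
    using bb a unfolding bounded_below_by_def by auto
  have "shifted_inner c a a' a = cinner a' a - complex_of_real (c * (norm a)\<^sup>2)"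
    unfolding shifted_inner_def cinner_diff_left cinner_scaleC_left cinner_self by simp
  thus ?thesis using i r by (simp add: complex_eq_iff)
qed

lemma shifted_inner_Cauchy_Schwarz:
  assumes a: "(a, a') \<in> H" and b: "(b, b') \<in> H"
  shows "(cmod (shifted_inner c a a' b))\<^sup>2 \<le> Re (shifted_inner c a a' a) * Re (shifted_inner c b b' b)"
proof (rule cmod_sq_le_of_quadratic_nonneg)
  let ?s = "shifted_inner c"
  show "Re (?s b b' b) \<ge> 0" using shifted_inner_self[OF b] by blast
  fix l
  have z: "(a + scaleC l b, a' + scaleC l b') \<in> H"
    using linear_relation_add[OF H_lin a linear_relation_scaleC[OF H_lin b]] .
  have "?s (a + scaleC l b) (a' + scaleC l b') (a + scaleC l b)
      = ?s a a' a + cnj l * ?s a a' b + l * ?s b b' a + l * cnj l * ?s b b' b"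
    unfolding shifted_inner_add_left shifted_inner_scaleC_left shifted_inner_add_right
      shifted_inner_scaleC_right by (simp add: algebra_simps)
  also have "?s b b' a = cnj (?s a a' b)" using shifted_inner_commute[OF a b] .
  also have "?s b b' b = complex_of_real (Re (?s b b' b))" using shifted_inner_self[OF b] by blast
  also have "l * cnj l = complex_of_real ((cmod l)\<^sup>2)" using complex_norm_square[of l] by simp
  finally have e: "Re (?s (a + scaleC l b) (a' + scaleC l b') (a + scaleC l b))
      = Re (?s a a' a) + 2 * Re (cnj l * ?s a a' b) + (cmod l)\<^sup>2 * Re (?s b b' b)"
  proof -
    assume "?s (a + scaleC l b) (a' + scaleC l b') (a + scaleC l b) =
      ?s a a' a + cnj l * ?s a a' b + l * cnj (?s a a' b) +
      complex_of_real ((cmod l)\<^sup>2) * complex_of_real (Re (?s b b' b))"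
    moreover have "Re (l * cnj (?s a a' b)) = Re (cnj l * ?s a a' b)"
      by (metis complex_cnj_cnj complex_cnj_mult cnj.simps(1))
    ultimately show ?thesis by simp
  qed
  show "0 \<le> Re (?s a a' a) + 2 * Re (cnj l * ?s a a' b) + (cmod l)\<^sup>2 * Re (?s b b' b)"
    using shifted_inner_self[OF z] e by linarith
qed

lemma form_approx_shifted_inner_double_null:
  assumes ap: "form_approx (rform H) u f" and U: "\<And>n. (u n, U n) \<in> H"
  shows "double_null (\<lambda>n m. Re (shifted_inner c (u n - u m) (U n - U m) (u n - u m)))"
proof -
  let ?t = "\<lambda>n m. snd (rform H) (u n - u m) (u n - u m)"
  have ux: "u \<longlonglongrightarrow> f" and t: "double_null (\<lambda>n m. cmod (?t n m))"
    using ap unfolding form_approx_iff by simp_all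
  have bound: "Re (shifted_inner c (u n - u m) (U n - U m) (u n - u m))
      \<le> cmod (?t n m) + \<bar>c\<bar> * (norm (u n - u m))\<^sup>2" for n m
  proof -
    have wH: "(u n - u m, U n - U m) \<in> H" using linear_relation_diff[OF H_lin U U] .
    have "shifted_inner c (u n - u m) (U n - U m) (u n - u m)
        = ?t n m - complex_of_real (c * (norm (u n - u m))\<^sup>2)"
      using rform_selfadjoint[OF sa wH rdomI[OF wH]]
      unfolding shifted_inner_def cinner_diff_left cinner_scaleC_left cinner_self by simp
    moreover have "Re (?t n m) \<le> cmod (?t n m)" by (rule complex_Re_le_cmod)
    moreover have "- (c * (norm (u n - u m))\<^sup>2) \<le> \<bar>c\<bar> * (norm (u n - u m))\<^sup>2"
      using abs_ge_minus_self[of "c * (norm (u n - u m))\<^sup>2"] by (simp add: abs_mult)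
    ultimately show ?thesis by simp
  qed
  have "double_null (\<lambda>n m. \<bar>c\<bar> * (norm (u n - u m))\<^sup>2)"
    using LIMSEQ_imp_Cauchy[OF ux] by (intro double_null_scale) (auto simp: Cauchy_iff_double_null)
  thus ?thesis using double_null_bound[OF t _ bound] by blast
qed

text \<open>With \<open>q = s[u n - f]\<close>, Cauchy--Schwarz gives \<open>|s[u n - u m, u n - f]|\<^sup>2 \<le> \<epsilon> q\<close>, and letting
  \<open>m \<rightarrow> \<infinity>\<close> turns the left-hand side into \<open>q\<^sup>2\<close>.\<close>

lemma shifted_inner_self_le_of_tail:
  assumes fg: "(f, g) \<in> H" and U: "\<And>n. (u n, U n) \<in> H" and ux: "u \<longlonglongrightarrow> f" and eps: "\<epsilon> \<ge> 0"
    and tail: "\<And>m. m \<ge> N \<Longrightarrow> Re (shifted_inner c (u n - u m) (U n - U m) (u n - u m)) \<le> \<epsilon>"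
  shows "Re (shifted_inner c (u n - f) (U n - g) (u n - f)) \<le> \<epsilon>"
proof -
  let ?s = "shifted_inner c"
  define q where "q = Re (?s (u n - f) (U n - g) (u n - f))"
  define \<beta> where "\<beta> = (\<lambda>m. ?s (u n - u m) (U n - U m) (u n - f))"
  have dH: "(u n - f, U n - g) \<in> H" using linear_relation_diff[OF H_lin U fg] .
  have wH: "(u n - u m, U n - U m) \<in> H" for m using linear_relation_diff[OF H_lin U U] .
  have q: "?s (u n - f) (U n - g) (u n - f) = complex_of_real q" "q \<ge> 0"
    unfolding q_def using shifted_inner_self[OF dH] by blast+
  have "(cmod (\<beta> m))\<^sup>2 \<le> \<epsilon> * q" if m: "m \<ge> N" for m
  proof -
    have "(cmod (\<beta> m))\<^sup>2 \<le> Re (?s (u n - u m) (U n - U m) (u n - u m)) * q"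
      unfolding \<beta>_def q_def by (rule shifted_inner_Cauchy_Schwarz[OF wH dH])
    also have "\<dots> \<le> \<epsilon> * q" using tail[OF m] q(2) by (rule mult_right_mono)
    finally show ?thesis .
  qed
  hence ev: "\<exists>N. \<forall>m\<ge>N. (cmod (\<beta> m))\<^sup>2 \<le> \<epsilon> * q" by blast
  have "\<beta> = (\<lambda>m. cnj (?s (u n - f) (U n - g) (u n - u m)))"
    unfolding \<beta>_def using shifted_inner_commute[OF dH wH] by (intro ext)
  moreover have "(\<lambda>m. ?s (u n - f) (U n - g) (u n - u m)) \<longlonglongrightarrow> ?s (u n - f) (U n - g) (u n - f)"
    unfolding shifted_inner_def by (intro tendsto_cinner tendsto_intros ux)
  ultimately have "\<beta> \<longlonglongrightarrow> cnj (?s (u n - f) (U n - g) (u n - f))" by (simp add: tendsto_cnj)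
  hence "\<beta> \<longlonglongrightarrow> complex_of_real q" unfolding q(1) by simp
  hence "(\<lambda>m. (cmod (\<beta> m))\<^sup>2) \<longlonglongrightarrow> (cmod (complex_of_real q))\<^sup>2" by (intro tendsto_intros)
  hence "(cmod (complex_of_real q))\<^sup>2 \<le> \<epsilon> * q" using ev by (rule LIMSEQ_le_const2)
  hence "q * q \<le> \<epsilon> * q" by (simp add: power2_eq_square)
  thus ?thesis unfolding q_def[symmetric] using q(2) eps mult_right_le_imp_le[of q q \<epsilon>]
    by (cases "q = 0") auto
qed

lemma form_approx_shifted_inner_null:
  assumes ap: "form_approx (rform H) u f" and fg: "(f, g) \<in> H" and U: "\<And>n. (u n, U n) \<in> H"
  shows "(\<lambda>n. Re (shifted_inner c (u n - f) (U n - g) (u n - f))) \<longlonglongrightarrow> 0"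
proof (rule LIMSEQ_I)
  let ?q = "\<lambda>n. Re (shifted_inner c (u n - f) (U n - g) (u n - f))"
  have ux: "u \<longlonglongrightarrow> f" using ap unfolding form_approx_iff by simp
  fix r :: real assume r: "r > 0"
  hence "r / 2 > 0" by simp
  then obtain N where N: "\<forall>m\<ge>N. \<forall>n\<ge>N. Re (shifted_inner c (u n - u m) (U n - U m) (u n - u m)) < r / 2"
    using form_approx_shifted_inner_double_null[OF ap U] unfolding double_null_def by blast
  have "norm (?q n - 0) < r" if n: "n \<ge> N" for n
  proof -
    have "Re (shifted_inner c (u n - u m) (U n - U m) (u n - u m)) \<le> r / 2" if "m \<ge> N" for m
      using N n that less_imp_le by blast
    moreover have "r / 2 \<ge> 0" using r by simp
    ultimately have "?q n \<le> r / 2" using shifted_inner_self_le_of_tail[OF fg U ux] by blast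
    moreover have "?q n \<ge> 0"
      using shifted_inner_self[OF linear_relation_diff[OF H_lin U fg]] by blast
    ultimately show ?thesis using r by simp
  qed
  thus "\<exists>no. \<forall>n\<ge>no. norm (?q n - 0) < r" by blast
qed

lemma closed_form_selfadjoint_value:
  assumes fg: "(f, g) \<in> H" and x: "x \<in> rdom H"
  shows "snd (closed_form H) f x = cinner g x"
proof -
  let ?s = "shifted_inner c"
  obtain x' where xx: "(x, x') \<in> H" using x unfolding rdom_def by blast
  define u where "u = (SOME u. form_approx (rform H) u f)"
  define v where "v = (SOME u. form_approx (rform H) u x)"
  have apu: "form_approx (rform H) u f" and apv: "form_approx (rform H) v x"
    unfolding u_def v_def using form_approx_const[OF rdomI[OF fg]] form_approx_const[OF x]
    by (metis someI)+
  have uH: "u n \<in> rdom H" and vH: "v n \<in> rdom H" and ux: "u \<longlonglongrightarrow> f" and vx: "v \<longlonglongrightarrow> x" for n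
    using apu apv unfolding form_approx_iff by auto
  define U where "U = (\<lambda>n. SOME a'. (u n, a') \<in> H)"
  define V where "V = (\<lambda>n. SOME a'. (v n, a') \<in> H)"
  have U: "(u n, U n) \<in> H" and V: "(v n, V n) \<in> H" for n
    unfolding U_def V_def using rform_some[OF uH] rform_some[OF vH] by auto
  have dH: "(u n - f, U n - g) \<in> H" and eH: "(v n - x, V n - x') \<in> H" for n
    using linear_relation_diff[OF H_lin U fg] linear_relation_diff[OF H_lin V xx] by auto
  have dec: "snd (rform H) (u n) (v n) = cinner g x + cinner g (v n - x) + cinner (u n - f) x'
      + ?s (u n - f) (U n - g) (v n - x) + complex_of_real c * cinner (u n - f) (v n - x)" for n
  proof -
    have "cinner (U n - g) x = cinner (u n - f) x'" using selfadjoint_cinner_sym[OF sa xx dH] .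
    thus ?thesis unfolding rform_selfadjoint[OF sa U vH] shifted_inner_def cinner_diff_left
        cinner_diff_right cinner_scaleC_left
      by (simp add: algebra_simps)
  qed
  have "(\<lambda>n. ?s (u n - f) (U n - g) (v n - x)) \<longlonglongrightarrow> 0"
  proof (rule Lim_null_comparison)
    show "\<forall>\<^sub>F n in sequentially. norm (?s (u n - f) (U n - g) (v n - x))
        \<le> sqrt (Re (?s (u n - f) (U n - g) (u n - f)) * Re (?s (v n - x) (V n - x') (v n - x)))"
      using shifted_inner_Cauchy_Schwarz[OF dH eH] by (intro always_eventually allI real_le_rsqrt) auto
    show "(\<lambda>n. sqrt (Re (?s (u n - f) (U n - g) (u n - f)) * Re (?s (v n - x) (V n - x') (v n - x)))) \<longlonglongrightarrow> 0"
      using tendsto_real_sqrt[OF tendsto_mult[OF form_approx_shifted_inner_null[OF apu fg U]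
            form_approx_shifted_inner_null[OF apv xx V]]] by simp
  qed
  hence "(\<lambda>n. cinner g x + cinner g (v n - x) + cinner (u n - f) x'
      + ?s (u n - f) (U n - g) (v n - x) + complex_of_real c * cinner (u n - f) (v n - x))
      \<longlonglongrightarrow> cinner g x + cinner g (x - x) + cinner (f - f) x' + 0 + complex_of_real c * cinner (f - f) (x - x)"
    by (intro tendsto_intros tendsto_cinner ux vx)
  hence "(\<lambda>n. snd (rform H) (u n) (v n)) \<longlonglongrightarrow> cinner g x" unfolding dec by simp
  thus ?thesis unfolding closed_form_snd u_def[symmetric] v_def[symmetric] by (rule limI)
qed

end

section \<open>Extensions between the Friedrichs and the Krein type extension\<close>

lemma representing_mapD:
  assumes "representing_map S c Q" and "(\<phi>, \<phi>') \<in> S" "(\<psi>, \<psi>') \<in> S" "(\<phi>, q) \<in> Q" "(\<psi>, p) \<in> Q"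
  shows "cinner \<phi>' \<psi> = complex_of_real c * cinner \<phi> \<psi> + cinner q p"
proof -
  have "\<forall>(\<phi>, \<phi>')\<in>S. \<forall>(\<psi>, \<psi>')\<in>S. \<forall>q p. (\<phi>, q) \<in> Q \<longrightarrow> (\<psi>, p) \<in> Q \<longrightarrow>
        cinner \<phi>' \<psi> = complex_of_real c * cinner \<phi> \<psi> + cinner q p"
    using assms(1) unfolding representing_map_def by blast
  from bspec[OF bspec[OF this assms(2), simplified] assms(3)] show ?thesis
    using assms(4,5) by simp
qed

lemma representing_map_subset_rreg:
  assumes rm: "representing_map S c Q"
  shows "Q \<subseteq> rreg (adj (companion S c Q))"
proof
  fix z assume z: "z \<in> Q"
  obtain \<phi> q where zq: "z = (\<phi>, q)" by fastforce
  have "\<phi> \<in> rdom S" using rdomI[of \<phi> q Q] z zq rm unfolding representing_map_def by simp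
  then obtain \<phi>' where \<phi>': "(\<phi>, \<phi>') \<in> S" unfolding rdom_def by blast
  have "(\<phi>, q) \<in> adj (companion S c Q)" unfolding mem_adj_iff
  proof (intro allI impI)
    fix a b assume "(a, b) \<in> companion S c Q"
    then obtain \<psi> \<psi>' where ab: "(\<psi>, \<psi>') \<in> S" "(\<psi>, a) \<in> Q" "b = \<psi>' - scaleC (complex_of_real c) \<psi>"
      unfolding companion_def by blast
    have "cinner \<psi>' \<phi> = complex_of_real c * cinner \<psi> \<phi> + cinner a q"
      using representing_mapD[OF rm ab(1) \<phi>' ab(2)] z zq by blast
    thus "cinner b \<phi> = cinner a q" unfolding ab(3) cinner_diff_left cinner_scaleC_left by simp
  qed
  moreover have "(q, \<phi>' - scaleC (complex_of_real c) \<phi>) \<in> companion S c Q"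
    unfolding companion_def using \<phi>' z zq by blast
  hence "cinner q m = 0" if "m \<in> rmul (adj (companion S c Q))" for m
    using adj_rmul_orthogonal_rdom that unfolding rmul_def by blast
  ultimately show "z \<in> rreg (adj (companion S c Q))"
    unfolding zq mem_rreg_iff[OF linear_relation_adj closed_adj] by blast
qed

lemma subset_rshift_adj_prod_companion:
  assumes rm: "representing_map S c Q" and QR: "Q \<subseteq> R" and RJ: "R \<subseteq> adj (companion S c Q)"
  shows "S \<subseteq> rshift c (rprod (adj R) (adj (adj R)))"
proof
  fix z assume z: "z \<in> S"
  obtain \<phi> \<phi>' where zz: "z = (\<phi>, \<phi>')" by fastforce
  have "\<phi> \<in> rdom Q" using rdomI[of \<phi> \<phi>' S] z zz rm unfolding representing_map_def by simp
  then obtain q where q: "(\<phi>, q) \<in> Q" unfolding rdom_def by blast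
  have "(q, \<phi>' - scaleC (complex_of_real c) \<phi>) \<in> companion S c Q"
    unfolding companion_def using z zz q by blast
  hence "(q, \<phi>' - scaleC (complex_of_real c) \<phi>) \<in> adj R"
    using RJ subset_adj_adj adj_antimono by blast
  moreover have "(\<phi>, q) \<in> adj (adj R)" using q QR subset_adj_adj by blast
  ultimately show "z \<in> rshift c (rprod (adj R) (adj (adj R)))"
    unfolding zz rshift_iff rprod_iff by blast
qed

lemma rshift_adj_prod_adj_adj: "rshift c (rprod (adj R) (adj (adj R))) = shifted_gram c (adj (adj R))"
  unfolding shifted_gram_def adj_adj_adj ..

lemma krein_eq_shifted_gram: "krein c J = shifted_gram c (rreg (adj J))"
  unfolding krein_def shifted_gram_def adj_prod_rreg[OF linear_relation_adj closed_adj] ..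

lemma closed_operator_rreg_adj: "closed (rreg (adj J))" "is_operator (rreg (adj J))"
  using closed_rreg is_operator_rreg linear_relation_adj closed_adj by blast+

lemma subset_rshift_adj_prod_restriction:
  assumes K: "closed K" "is_operator K" and sa: "selfadjoint H" and bb: "bounded_below_by H c"
    and incl: "form_incl (closed_form H) (closed_form (shifted_gram c K))"
  defines "R \<equiv> {p \<in> K. fst p \<in> rdom H}"
  shows "H \<subseteq> rshift c (rprod (adj R) (adj (adj R)))"
proof
  have domH: "f \<in> fst (closed_form H)" if "f \<in> rdom H" for f
    unfolding closed_form_fst using form_approx_const[OF that] by blast
  have dom: "f \<in> fst (closed_form (shifted_gram c K))" if "f \<in> rdom H" for f
    using incl domH[OF that] unfolding form_incl_def by blast
  fix z assume z: "z \<in> H"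
  obtain f g where zz: "z = (f, g)" by fastforce
  have fH: "f \<in> rdom H" using rdomI z zz by metis
  obtain a where fa: "(f, a) \<in> K"
    using dom[OF fH] closed_form_shifted_gram_fst[OF K] unfolding rdom_def by blast
  have "(a, g - scaleC (complex_of_real c) f) \<in> adj R" unfolding mem_adj_iff
  proof (intro allI impI)
    fix x b assume "(x, b) \<in> R"
    hence xH: "x \<in> rdom H" and xb: "(x, b) \<in> K" unfolding R_def by auto
    have "cinner g x = snd (closed_form H) f x"
      using closed_form_selfadjoint_value[OF sa bb] z zz xH by simp
    also have "\<dots> = snd (closed_form (shifted_gram c K)) f x"
      using incl domH[OF fH] domH[OF xH] unfolding form_incl_def by simp
    also have "\<dots> = complex_of_real c * cinner f x + cinner a b"
      by (rule closed_form_shifted_gram_value[OF K dom[OF fH] dom[OF xH] fa xb])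
    finally have "cinner (g - scaleC (complex_of_real c) f) x = cinner a b"
      unfolding cinner_diff_left cinner_scaleC_left by simp
    thus "cinner b a = cinner x (g - scaleC (complex_of_real c) f)"
      by (rule cinner_eq_commute[symmetric])
  qed
  moreover have "(f, a) \<in> R" unfolding R_def using fa fH by simp
  hence "(f, a) \<in> adj (adj R)" using subset_adj_adj by blast
  ultimately show "z \<in> rshift c (rprod (adj R) (adj (adj R)))"
    unfolding zz rshift_iff rprod_iff by blast
qed

lemma selfadjoint_eq_shifted_gram_restriction:
  assumes K: "closed K" "is_operator K" and sa: "selfadjoint H" and bb: "bounded_below_by H c"
    and incl: "form_incl (closed_form H) (closed_form (shifted_gram c K))"
  defines "R \<equiv> {p \<in> K. fst p \<in> rdom H}"
  shows "H = rshift c (rprod (adj R) (adj (adj R)))"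
proof -
  have "H \<subseteq> rshift c (rprod (adj R) (adj (adj R)))"
    unfolding R_def by (rule subset_rshift_adj_prod_restriction[OF K sa bb incl])
  moreover have "selfadjoint (rshift c (rprod (adj R) (adj (adj R))))"
    unfolding rshift_adj_prod_adj_adj by (rule selfadjoint_shifted_gram[OF linear_relation_adj closed_adj])
  ultimately show ?thesis
    using adj_antimono[of H "rshift c (rprod (adj R) (adj (adj R)))"] sa
    unfolding selfadjoint_def by auto
qed

lemma shifted_gram_extension_between_Friedrichs_Krein:
  assumes rm: "representing_map S c Q" and R: "is_operator R"
    and QR: "Q \<subseteq> R" and RK: "R \<subseteq> rreg (adj (companion S c Q))"
  defines "H \<equiv> rshift c (rprod (adj R) (adj (adj R)))"
  shows "selfadjoint H \<and> S \<subseteq> H \<and> bounded_below_by H c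
    \<and> form_incl (closed_form (friedrichs c Q)) (closed_form H)
    \<and> form_incl (closed_form H) (closed_form (krein c (companion S c Q)))"
proof (intro conjI)
  let ?K = "rreg (adj (companion S c Q))"
  note K = closed_operator_rreg_adj[of "companion S c Q"]
  have H: "H = shifted_gram c (adj (adj R))" unfolding H_def by (rule rshift_adj_prod_adj_adj)
  have R2: "closed (adj (adj R))" "is_operator (adj (adj R))"
    using closed_adj adj_adj_subset_closed_operator[OF K(2,1) RK] by blast+
  have Q2: "closed (adj (adj Q))" "is_operator (adj (adj Q))"
    using closed_adj adj_adj_subset_closed_operator[OF K(2,1)] QR RK by blast+
  show "selfadjoint H"
    unfolding H by (rule selfadjoint_shifted_gram[OF linear_relation_adj closed_adj])
  show "S \<subseteq> H"
    unfolding H_def using subset_rshift_adj_prod_companion[OF rm QR] RK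
      rreg_subset[OF linear_relation_adj closed_adj] by blast
  show "bounded_below_by H c"
    unfolding H shifted_gram_def by (rule bounded_below_by_rshift_adj_prod)
  show "form_incl (closed_form (friedrichs c Q)) (closed_form H)"
    unfolding H friedrichs_def rshift_adj_prod_adj_adj
    using form_incl_closed_form_shifted_gram[OF Q2 R2] adj_antimono[OF adj_antimono[OF QR]] by blast
  show "form_incl (closed_form H) (closed_form (krein c (companion S c Q)))"
    unfolding H krein_eq_shifted_gram
    using form_incl_closed_form_shifted_gram[OF R2 K] adj_adj_subset_closed_operator[OF K(2,1) RK] by blast
qed

lemma extension_between_Friedrichs_Krein_eq_shifted_gram:
  assumes rm: "representing_map S c Q" and sa: "selfadjoint H" and SH: "S \<subseteq> H"
    and bb: "bounded_below_by H c"
    and incl: "form_incl (closed_form H) (closed_form (krein c (companion S c Q)))"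
  shows "\<exists>R. is_operator R \<and> Q \<subseteq> R \<and> R \<subseteq> rreg (adj (companion S c Q))
    \<and> H = rshift c (rprod (adj R) (adj (adj R)))"
proof (intro exI conjI)
  let ?K = "rreg (adj (companion S c Q))"
  let ?R = "{p \<in> ?K. fst p \<in> rdom H}"
  note K = closed_operator_rreg_adj[of "companion S c Q"]
  show "is_operator ?R" by (rule is_operator_restrict_rdom[OF K(2) selfadjoint_linear_relation[OF sa]])
  have "rdom Q \<subseteq> rdom H" using rm SH unfolding representing_map_def rdom_def by blast
  thus "Q \<subseteq> ?R" using representing_map_subset_rreg[OF rm] rdomI by fastforce
  show "?R \<subseteq> ?K" by blast
  show "H = rshift c (rprod (adj ?R) (adj (adj ?R)))"
    using selfadjoint_eq_shifted_gram_restriction[OF K sa bb] incl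
    unfolding krein_eq_shifted_gram by blast
qed

theorem lemma7p2:
  fixes S H :: "('h::chilbert \<times> 'h) set"
    and Q :: "('h \<times> 'k::chilbert) set"
    and \<gamma> c :: real
  assumes "lower_bound S \<gamma>"
    and "c \<le> \<gamma>"
    and "representing_map S c Q"
  shows "(selfadjoint H \<and> S \<subseteq> H \<and> bounded_below_by H c
          \<and> form_incl (closed_form (friedrichs c Q)) (closed_form H)
          \<and> form_incl (closed_form H) (closed_form (krein c (companion S c Q))))
     \<longleftrightarrow> (\<exists>R :: ('h \<times> 'k) set. is_operator R
          \<and> Q \<subseteq> R \<and> R \<subseteq> rreg (adj (companion S c Q))
          \<and> H = rshift c (rprod (adj R) (adj (adj R))))"
  using extension_between_Friedrichs_Krein_eq_shifted_gram[OF assms(3), of H]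
    shifted_gram_extension_between_Friedrichs_Krein[OF assms(3)]
  by blast

end
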